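(* Let $X$ be a $T_1$ space and $\mathcal C$ a pre-pseudogroup on $X$. Equip the morphism set $\mathrm{Mor}(\mathcal C^\star)=\coprod_{x,y\in X}\mathcal C_x^y\cong\coprod_{x\in X}\mathcal C_x(X)=E_{\mathcal C}$ with the topology of the étale space of the presheaf $\mathcal C(-,X)$ (generated by the sets $[f,U]=\{f_x: x\in U\}$ for open $U$ and $f\in\mathcal C(U,X)$), and equip the object set with the topology of $X$. Then $\mathcal C^\star$ is a topological étale groupoid over $X$: the source map $s(f_x)=x$ and the target map $t$ (with $t(\varphi)=y$ for $\varphi\in\mathcal C_x^y$) are local homeomorphisms, and the identity map $X\to E_{\mathcal C}$, the inversion $E_{\mathcal C}\to E_{\mathcal C}$ and the composition $E_{\mathcal C}\times_X E_{\mathcal C}\to E_{\mathcal C}$ are continuous.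
   Context: $X_{top}$ denotes the set of open subsets of $X$, regarded as a category with exactly one morphism $U\to V$ iff $U\subseteq V$. Let $\mathcal C$ be a small category with $\mathrm{Ob}(\mathcal C)=X_{top}$ containing $X_{top}$ as a subcategory (identity on objects). For each open $V$, $\mathcal C(-,V)$ is a presheaf of sets on $X$ (restriction along $U'\subseteq U$ = precomposition with the inclusion morphism). For $x\in X$ let $\mathcal C_x(V)=\operatorname{colim}_{U\ni x}\mathcal C(U,V)$ (germ of $f\in\mathcal C(U,V)$ at $x$ written $f_x$); postcomposition with inclusions makes this functorial in $V$, and for $y\in X$ let $\mathcal C_x^y=\lim_{V\ni y}\mathcal C_x(V)$ (limit over open neighbourhoods of $y$), with projections $\mathcal C_x^y\to\mathcal C_x(V)$. Composition in $\mathcal C$ induces $\mathcal C_y^z\times\mathcal C_x^y\to\mathcal C_x^z$: given $\varphi\in\mathcal C_x^y,\psi\in\mathcal C_y^z$ and open $W\ni z$, choose $g\in\mathcal C(V,W)$, $y\in V$, representing the component $\psi_W$, and $f\in\mathcal C(U,V)$ representing $\varphi_V$; the $W$-component of $\psi\circ\varphi$ is $(g\circ f)_x$. This defines a category $\mathcal C^\star$ with objects the points of $X$ and $\mathcal C^\star(x,y)=\mathcal C_x^y$. For $X$ a $T_1$ space, a pre-pseudogroup on $X$ is such a $\mathcal C$ satisfying: (1) $\mathrm{Ob}(\mathcal C)=\mathrm{Ob}(X_{top})$; (2) for every open $V$ and $x\in X$, the map $\coprod_{y\in V}\mathcal C_x^y\to\mathcal C_x(V)$ induced by the projections is a bijection;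 (3) $\mathcal C^\star$ is a groupoid. A topological groupoid over $X$ has object space $X$ and a topological morphism space with continuous structure maps; it is étale if source and target are local homeomorphisms. *)

theory Defs
  imports "HOL-Analysis.Analysis"
begin

text \<open>A small category C whose objects are the open sets of a topological space X.
  Morphisms are elements of type 'm in the set Mor; dm/cd give their source and
  target objects (open sets); cmp g f is the composite g o f; ident U the identity.
  incl U V is the inclusion morphism U -> V (for U subset V) of the subcategory X_top.\<close>

definition cat_on_opens ::
  "'a topology \<Rightarrow> 'm set \<Rightarrow> ('m \<Rightarrow> 'a set) \<Rightarrow> ('m \<Rightarrow> 'a set)
   \<Rightarrow> ('m \<Rightarrow> 'm \<Rightarrow> 'm) \<Rightarrow> ('a set \<Rightarrow> 'm) \<Rightarrow> bool" where
  "cat_on_opens X Mor dm cd cmp ident \<longleftrightarrow>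
     (\<forall>f\<in>Mor. openin X (dm f) \<and> openin X (cd f)) \<and>
     (\<forall>f\<in>Mor. \<forall>g\<in>Mor. cd f = dm g \<longrightarrow>
         cmp g f \<in> Mor \<and> dm (cmp g f) = dm f \<and> cd (cmp g f) = cd g) \<and>
     (\<forall>f\<in>Mor. \<forall>g\<in>Mor. \<forall>h\<in>Mor. cd f = dm g \<and> cd g = dm h \<longrightarrow>
         cmp h (cmp g f) = cmp (cmp h g) f) \<and>
     (\<forall>U. openin X U \<longrightarrow> ident U \<in> Mor \<and> dm (ident U) = U \<and> cd (ident U) = U) \<and>
     (\<forall>f\<in>Mor. cmp (ident (cd f)) f = f \<and> cmp f (ident (dm f)) = f)"

definition contains_Xtop ::
  "'a topology \<Rightarrow> 'm set \<Rightarrow> ('m \<Rightarrow> 'a set) \<Rightarrow> ('m \<Rightarrow> 'a set)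
   \<Rightarrow> ('m \<Rightarrow> 'm \<Rightarrow> 'm) \<Rightarrow> ('a set \<Rightarrow> 'm) \<Rightarrow> ('a set \<Rightarrow> 'a set \<Rightarrow> 'm) \<Rightarrow> bool" where
  "contains_Xtop X Mor dm cd cmp ident incl \<longleftrightarrow>
     (\<forall>U V. openin X U \<and> openin X V \<and> U \<subseteq> V \<longrightarrow>
         incl U V \<in> Mor \<and> dm (incl U V) = U \<and> cd (incl U V) = V) \<and>
     (\<forall>U. openin X U \<longrightarrow> incl U U = ident U) \<and>
     (\<forall>U V W. openin X U \<and> openin X V \<and> openin X W \<and> U \<subseteq> V \<and> V \<subseteq> W \<longrightarrow>
         cmp (incl V W) (incl U V) = incl U W)"

text \<open>Germ at x of a morphism f (with x in dm f) of the presheaf C(-, cd f):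
  the set of all morphisms g into cd f, with x in dm g, agreeing with f after
  restriction (precomposition with inclusions) to some open W with x in W.\<close>
definition germ ::
  "'a topology \<Rightarrow> 'm set \<Rightarrow> ('m \<Rightarrow> 'a set) \<Rightarrow> ('m \<Rightarrow> 'a set)
   \<Rightarrow> ('m \<Rightarrow> 'm \<Rightarrow> 'm) \<Rightarrow> ('a set \<Rightarrow> 'a set \<Rightarrow> 'm) \<Rightarrow> 'a \<Rightarrow> 'm \<Rightarrow> 'm set" where
  "germ X Mor dm cd cmp incl x f =
     {g \<in> Mor. cd g = cd f \<and> x \<in> dm g \<and>
        (\<exists>W. openin X W \<and> x \<in> W \<and> W \<subseteq> dm f \<inter> dm g \<and>
             cmp f (incl W (dm f)) = cmp g (incl W (dm g)))}"

text \<open>The stalk C_x(V) = colim_{U containing x} C(U,V).\<close>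
definition stalk ::
  "'a topology \<Rightarrow> 'm set \<Rightarrow> ('m \<Rightarrow> 'a set) \<Rightarrow> ('m \<Rightarrow> 'a set)
   \<Rightarrow> ('m \<Rightarrow> 'm \<Rightarrow> 'm) \<Rightarrow> ('a set \<Rightarrow> 'a set \<Rightarrow> 'm) \<Rightarrow> 'a \<Rightarrow> 'a set \<Rightarrow> 'm set set" where
  "stalk X Mor dm cd cmp incl x V =
     {germ X Mor dm cd cmp incl x f | f. f \<in> Mor \<and> cd f = V \<and> x \<in> dm f}"

definition push ::
  "'a topology \<Rightarrow> 'm set \<Rightarrow> ('m \<Rightarrow> 'a set) \<Rightarrow> ('m \<Rightarrow> 'a set)
   \<Rightarrow> ('m \<Rightarrow> 'm \<Rightarrow> 'm) \<Rightarrow> ('a set \<Rightarrow> 'a set \<Rightarrow> 'm) \<Rightarrow> 'a \<Rightarrow> 'a set \<Rightarrow> 'a set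
   \<Rightarrow> 'm set \<Rightarrow> 'm set" where
  "push X Mor dm cd cmp incl x V V' \<gamma> =
     (\<Union>f\<in>\<gamma>. germ X Mor dm cd cmp incl x (cmp (incl V V') f))"

text \<open>C_x^y = lim_{V containing y} C_x(V): compatible families, indexed by the open
  neighbourhoods V of y (value {} at other sets, for extensionality).\<close>
definition hom_star ::
  "'a topology \<Rightarrow> 'm set \<Rightarrow> ('m \<Rightarrow> 'a set) \<Rightarrow> ('m \<Rightarrow> 'a set)
   \<Rightarrow> ('m \<Rightarrow> 'm \<Rightarrow> 'm) \<Rightarrow> ('a set \<Rightarrow> 'a set \<Rightarrow> 'm) \<Rightarrow> 'a \<Rightarrow> 'a
   \<Rightarrow> ('a set \<Rightarrow> 'm set) set" where
  "hom_star X Mor dm cd cmp incl x y =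
     {\<phi>. (\<forall>V. openin X V \<and> y \<in> V \<longrightarrow> \<phi> V \<in> stalk X Mor dm cd cmp incl x V) \<and>
         (\<forall>V V'. openin X V \<and> openin X V' \<and> y \<in> V \<and> V \<subseteq> V' \<longrightarrow>
             push X Mor dm cd cmp incl x V V' (\<phi> V) = \<phi> V') \<and>
         (\<forall>V. \<not> (openin X V \<and> y \<in> V) \<longrightarrow> \<phi> V = {})}"

definition comp_star ::
  "'a topology \<Rightarrow> 'm set \<Rightarrow> ('m \<Rightarrow> 'a set) \<Rightarrow> ('m \<Rightarrow> 'a set)
   \<Rightarrow> ('m \<Rightarrow> 'm \<Rightarrow> 'm) \<Rightarrow> ('a set \<Rightarrow> 'a set \<Rightarrow> 'm) \<Rightarrow> 'a \<Rightarrow> 'a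
   \<Rightarrow> ('a set \<Rightarrow> 'm set) \<Rightarrow> ('a set \<Rightarrow> 'm set) \<Rightarrow> ('a set \<Rightarrow> 'm set)" where
  "comp_star X Mor dm cd cmp incl x z \<psi> \<phi> =
     (\<lambda>W. if openin X W \<and> z \<in> W
          then (\<Union>{germ X Mor dm cd cmp incl x (cmp g f) | g f. g \<in> \<psi> W \<and> f \<in> \<phi> (dm g)})
          else {})"

definition id_star ::
  "'a topology \<Rightarrow> 'm set \<Rightarrow> ('m \<Rightarrow> 'a set) \<Rightarrow> ('m \<Rightarrow> 'a set)
   \<Rightarrow> ('m \<Rightarrow> 'm \<Rightarrow> 'm) \<Rightarrow> ('a set \<Rightarrow> 'm) \<Rightarrow> ('a set \<Rightarrow> 'a set \<Rightarrow> 'm) \<Rightarrow> 'a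
   \<Rightarrow> ('a set \<Rightarrow> 'm set)" where
  "id_star X Mor dm cd cmp ident incl x =
     (\<lambda>W. if openin X W \<and> x \<in> W then germ X Mor dm cd cmp incl x (ident W) else {})"

definition pre_pseudogroup ::
  "'a topology \<Rightarrow> 'm set \<Rightarrow> ('m \<Rightarrow> 'a set) \<Rightarrow> ('m \<Rightarrow> 'a set)
   \<Rightarrow> ('m \<Rightarrow> 'm \<Rightarrow> 'm) \<Rightarrow> ('a set \<Rightarrow> 'm) \<Rightarrow> ('a set \<Rightarrow> 'a set \<Rightarrow> 'm) \<Rightarrow> bool" where
  "pre_pseudogroup X Mor dm cd cmp ident incl \<longleftrightarrow>
     cat_on_opens X Mor dm cd cmp ident \<and>
     contains_Xtop X Mor dm cd cmp ident incl \<and>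
     \<comment> \<open>(2) the projections induce a bijection  coprod_{y in V} C_x^y -> C_x(V)\<close>
     (\<forall>V x. openin X V \<and> x \<in> topspace X \<longrightarrow>
        bij_betw (\<lambda>(y, \<phi>). \<phi> V) (SIGMA y:V. hom_star X Mor dm cd cmp incl x y)
                 (stalk X Mor dm cd cmp incl x V)) \<and>
     \<comment> \<open>(3) C^star is a groupoid\<close>
     (\<forall>x\<in>topspace X. \<forall>y\<in>topspace X. \<forall>\<phi>\<in>hom_star X Mor dm cd cmp incl x y.
        \<exists>\<psi>\<in>hom_star X Mor dm cd cmp incl y x.
          comp_star X Mor dm cd cmp incl x x \<psi> \<phi> = id_star X Mor dm cd cmp ident incl x \<and>
          comp_star X Mor dm cd cmp incl y y \<phi> \<psi> = id_star X Mor dm cd cmp ident incl y)"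

definition mor_star ::
  "'a topology \<Rightarrow> 'm set \<Rightarrow> ('m \<Rightarrow> 'a set) \<Rightarrow> ('m \<Rightarrow> 'a set)
   \<Rightarrow> ('m \<Rightarrow> 'm \<Rightarrow> 'm) \<Rightarrow> ('a set \<Rightarrow> 'a set \<Rightarrow> 'm)
   \<Rightarrow> ('a \<times> 'a \<times> ('a set \<Rightarrow> 'm set)) set" where
  "mor_star X Mor dm cd cmp incl =
     {(x, y, \<phi>). x \<in> topspace X \<and> y \<in> topspace X \<and> \<phi> \<in> hom_star X Mor dm cd cmp incl x y}"

text \<open>Topology on Mor(C^star), transported from the etale space E_C of C(-,X)
  along (x,y,phi) |-> phi_X: generated by the sets [f,U] = {f_x : x in U},
  f in C(U,X), U open.\<close>
definition mor_top ::
  "'a topology \<Rightarrow> 'm set \<Rightarrow> ('m \<Rightarrow> 'a set) \<Rightarrow> ('m \<Rightarrow> 'a set)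
   \<Rightarrow> ('m \<Rightarrow> 'm \<Rightarrow> 'm) \<Rightarrow> ('a set \<Rightarrow> 'a set \<Rightarrow> 'm)
   \<Rightarrow> ('a \<times> 'a \<times> ('a set \<Rightarrow> 'm set)) topology" where
  "mor_top X Mor dm cd cmp incl =
     subtopology
       (topology_generated_by
          {{(x, y, \<phi>) \<in> mor_star X Mor dm cd cmp incl. x \<in> dm f \<and>
               \<phi> (topspace X) = germ X Mor dm cd cmp incl x f}
           | f. f \<in> Mor \<and> cd f = topspace X})
       (mor_star X Mor dm cd cmp incl)"

definition src_star :: "('a \<times> 'a \<times> 'b) \<Rightarrow> 'a" where
  "src_star p = fst p"

definition tgt_star :: "('a \<times> 'a \<times> 'b) \<Rightarrow> 'a" where
  "tgt_star p = fst (snd p)"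

definition inv_star ::
  "'a topology \<Rightarrow> 'm set \<Rightarrow> ('m \<Rightarrow> 'a set) \<Rightarrow> ('m \<Rightarrow> 'a set)
   \<Rightarrow> ('m \<Rightarrow> 'm \<Rightarrow> 'm) \<Rightarrow> ('a set \<Rightarrow> 'm) \<Rightarrow> ('a set \<Rightarrow> 'a set \<Rightarrow> 'm)
   \<Rightarrow> ('a \<times> 'a \<times> ('a set \<Rightarrow> 'm set)) \<Rightarrow> ('a \<times> 'a \<times> ('a set \<Rightarrow> 'm set))" where
  "inv_star X Mor dm cd cmp ident incl p =
     (case p of (x, y, \<phi>) \<Rightarrow>
        (y, x, THE \<psi>. \<psi> \<in> hom_star X Mor dm cd cmp incl y x \<and>
          comp_star X Mor dm cd cmp incl x x \<psi> \<phi> = id_star X Mor dm cd cmp ident incl x \<and>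
          comp_star X Mor dm cd cmp incl y y \<phi> \<psi> = id_star X Mor dm cd cmp ident incl y))"

definition compose_star ::
  "'a topology \<Rightarrow> 'm set \<Rightarrow> ('m \<Rightarrow> 'a set) \<Rightarrow> ('m \<Rightarrow> 'a set)
   \<Rightarrow> ('m \<Rightarrow> 'm \<Rightarrow> 'm) \<Rightarrow> ('a set \<Rightarrow> 'a set \<Rightarrow> 'm)
   \<Rightarrow> ('a \<times> 'a \<times> ('a set \<Rightarrow> 'm set)) \<times> ('a \<times> 'a \<times> ('a set \<Rightarrow> 'm set))
   \<Rightarrow> ('a \<times> 'a \<times> ('a set \<Rightarrow> 'm set))" where
  "compose_star X Mor dm cd cmp incl qp =
     (case qp of ((y, z, \<psi>), (x, y', \<phi>)) \<Rightarrow>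
        (x, z, comp_star X Mor dm cd cmp incl x z \<psi> \<phi>))"

definition local_homeomorphism_map :: "'a topology \<Rightarrow> 'b topology \<Rightarrow> ('a \<Rightarrow> 'b) \<Rightarrow> bool" where
  "local_homeomorphism_map S T f \<longleftrightarrow>
     f ` topspace S \<subseteq> topspace T \<and>
     (\<forall>p\<in>topspace S. \<exists>N. openin S N \<and> p \<in> N \<and> openin T (f ` N) \<and>
         homeomorphic_map (subtopology S N) (subtopology T (f ` N)) f)"

end

theory Submission
  imports Defs
begin

(* Every arrow (x, y, phi) of C-star is determined by its component at X, which is the germ at x of
   some f in C(U, X).  By the bijection axiom the basic set [f, U] is the image of a section of the
   source map over U, so the source map is a local homeomorphism.  Germs that agree at a point agree
   on a neighbourhood of it, and composites are computed on representatives as (g o f)_x; hence a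
   composite lying in a basic set [k, W] stays in it for all arrows of a product of basic
   neighbourhoods.  For inversion it suffices to produce left inverses near a given arrow, since in
   a groupoid a left inverse is the inverse; the target map is then the source map composed with
   the involution given by inversion. *)

section \<open>Bases and local homeomorphisms\<close>

lemma generate_topology_on_base:
  assumes refine: "\<And>b1 b2 p. \<lbrakk>b1 \<in> \<B>; b2 \<in> \<B>; p \<in> b1 \<inter> b2\<rbrakk>
      \<Longrightarrow> \<exists>b\<in>\<B>. p \<in> b \<and> b \<subseteq> b1 \<inter> b2"
    and "generate_topology_on \<B> S" "p \<in> S"
  shows "\<exists>b\<in>\<B>. p \<in> b \<and> b \<subseteq> S"
  using assms(2,3)
proof (induction arbitrary: p)
  case Empty
  then show ?case by simp
next
  case (Int S1 S2)
  obtain b1 where "b1 \<in> \<B>" "p \<in> b1" "b1 \<subseteq> S1"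
    using Int.IH(1) Int.prems by blast
  moreover obtain b2 where "b2 \<in> \<B>" "p \<in> b2" "b2 \<subseteq> S2"
    using Int.IH(2) Int.prems by blast
  ultimately show ?case using refine[of b1 b2 p] by blast
next
  case (UN K)
  obtain k where "k \<in> K" "p \<in> k" using UN.prems by blast
  then show ?case using UN.IH[of k p] by blast
next
  case (Basis s)
  then show ?case by blast
qed

lemma openin_subtopology_generated_by_base:
  assumes sub: "\<And>b. b \<in> \<B> \<Longrightarrow> b \<subseteq> M"
    and refine: "\<And>b1 b2 p. \<lbrakk>b1 \<in> \<B>; b2 \<in> \<B>; p \<in> b1 \<inter> b2\<rbrakk>
      \<Longrightarrow> \<exists>b\<in>\<B>. p \<in> b \<and> b \<subseteq> b1 \<inter> b2"
  shows "openin (subtopology (topology_generated_by \<B>) M) U \<longleftrightarrow>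
           U \<subseteq> M \<and> (\<forall>p\<in>U. \<exists>b\<in>\<B>. p \<in> b \<and> b \<subseteq> U)"
proof
  assume "openin (subtopology (topology_generated_by \<B>) M) U"
  then obtain S where S: "generate_topology_on \<B> S" "U = S \<inter> M"
    by (auto simp: openin_subtopology openin_topology_generated_by_iff)
  have "\<exists>b\<in>\<B>. p \<in> b \<and> b \<subseteq> U" if "p \<in> U" for p
  proof -
    have "p \<in> S" using that S(2) by blast
    with refine S(1) have "\<exists>b\<in>\<B>. p \<in> b \<and> b \<subseteq> S"
      by (rule generate_topology_on_base)
    then obtain b where "b \<in> \<B>" "p \<in> b" "b \<subseteq> S" by blast
    then show ?thesis using sub[of b] S(2) by blast
  qed
  then show "U \<subseteq> M \<and> (\<forall>p\<in>U. \<exists>b\<in>\<B>. p \<in> b \<and> b \<subseteq> U)"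
    using S(2) by blast
next
  assume U: "U \<subseteq> M \<and> (\<forall>p\<in>U. \<exists>b\<in>\<B>. p \<in> b \<and> b \<subseteq> U)"
  then have "U = \<Union>{b \<in> \<B>. b \<subseteq> U}" by blast
  moreover have "generate_topology_on \<B> (\<Union>{b \<in> \<B>. b \<subseteq> U})"
    by (rule generate_topology_on.UN) (simp add: generate_topology_on.Basis)
  ultimately have "openin (topology_generated_by \<B>) U"
    by (simp add: openin_topology_generated_by_iff)
  then have "openin (subtopology (topology_generated_by \<B>) M) (U \<inter> M)"
    by (rule openin_subtopology_Int)
  then show "openin (subtopology (topology_generated_by \<B>) M) U"
    using U by (simp add: Int_absorb2)
qed

lemma continuous_map_into_generated_by_base:
  assumes sub: "\<And>b. b \<in> \<B> \<Longrightarrow> b \<subseteq> M"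
    and refine: "\<And>b1 b2 p. \<lbrakk>b1 \<in> \<B>; b2 \<in> \<B>; p \<in> b1 \<inter> b2\<rbrakk>
      \<Longrightarrow> \<exists>b\<in>\<B>. p \<in> b \<and> b \<subseteq> b1 \<inter> b2"
    and cover: "M \<subseteq> \<Union>\<B>"
    and into: "\<And>p. p \<in> topspace S \<Longrightarrow> F p \<in> M"
    and near: "\<And>p b. \<lbrakk>p \<in> topspace S; b \<in> \<B>; F p \<in> b\<rbrakk>
      \<Longrightarrow> \<exists>N. openin S N \<and> p \<in> N \<and> F ` N \<subseteq> b"
  shows "continuous_map S (subtopology (topology_generated_by \<B>) M) F"
  unfolding continuous_map
proof (intro conjI allI impI)
  show "F ` topspace S \<subseteq> topspace (subtopology (topology_generated_by \<B>) M)"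
    using into cover by auto
next
  fix U assume "openin (subtopology (topology_generated_by \<B>) M) U"
  with sub refine have "U \<subseteq> M \<and> (\<forall>q\<in>U. \<exists>b\<in>\<B>. q \<in> b \<and> b \<subseteq> U)"
    by (rule iffD1[OF openin_subtopology_generated_by_base])
  then have U: "\<forall>q\<in>U. \<exists>b\<in>\<B>. q \<in> b \<and> b \<subseteq> U" by blast
  show "openin S {p \<in> topspace S. F p \<in> U}"
  proof (subst openin_subopen, intro ballI)
    fix p assume p: "p \<in> {p \<in> topspace S. F p \<in> U}"
    then obtain b where "b \<in> \<B>" "F p \<in> b" "b \<subseteq> U" using U by blast
    then obtain N where N: "openin S N" "p \<in> N" "F ` N \<subseteq> U" using near[of p b] p by blast
    then have "N \<subseteq> {p \<in> topspace S. F p \<in> U}" using openin_subset[OF N(1)] by blast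
    then show "\<exists>N. openin S N \<and> p \<in> N \<and> N \<subseteq> {p \<in> topspace S. F p \<in> U}"
      using N(1,2) by blast
  qed
qed

lemma image_Collect_preimage: "\<lbrakk>f ` A = B; C \<subseteq> B\<rbrakk> \<Longrightarrow> f ` {x \<in> A. f x \<in> C} = C"
  by blast

lemma local_homeomorphism_map_homeomorphic_compose:
  assumes h: "homeomorphic_map S S' h" and f: "local_homeomorphism_map S' T f"
    and g: "\<And>x. x \<in> topspace S \<Longrightarrow> g x = f (h x)"
  shows "local_homeomorphism_map S T g"
proof -
  have hS: "h ` topspace S = topspace S'"
    using h by (rule homeomorphic_imp_surjective_map)
  have "g ` topspace S = f ` h ` topspace S"
    using g by (simp add: image_image)
  then have "g ` topspace S \<subseteq> topspace T"
    using f hS unfolding local_homeomorphism_map_def by simp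
  moreover have "\<exists>N. openin S N \<and> p \<in> N \<and> openin T (g ` N) \<and>
      homeomorphic_map (subtopology S N) (subtopology T (g ` N)) g" if p: "p \<in> topspace S" for p
  proof -
    have "h p \<in> topspace S'" using hS p by blast
    then obtain N' where N': "openin S' N'" "h p \<in> N'" "openin T (f ` N')"
        "homeomorphic_map (subtopology S' N') (subtopology T (f ` N')) f"
      using f unfolding local_homeomorphism_map_def by blast
    define N where "N = {x \<in> topspace S. h x \<in> N'}"
    have oN: "openin S N"
      unfolding N_def using homeomorphic_imp_continuous_map[OF h] N'(1)
      by (rule openin_continuous_map_preimage)
    have pN: "p \<in> N" unfolding N_def using p N'(2) by blast
    have hN: "h ` N = N'"
      unfolding N_def using hS openin_subset[OF N'(1)] by (rule image_Collect_preimage)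
    have "topspace S \<inter> N = N" unfolding N_def by blast
    then have "h ` (topspace S \<inter> N) = topspace S' \<inter> N'"
      using hN openin_subset[OF N'(1)] by (simp add: Int_absorb1)
    then have "homeomorphic_map (subtopology S N) (subtopology T (f ` N')) (f \<circ> h)"
      using homeomorphic_map_compose[OF homeomorphic_map_subtopologies[OF h] N'(4)] by blast
    moreover have "g ` N = f ` h ` N"
      unfolding image_image using g unfolding N_def by (intro image_cong) auto
    then have gN: "g ` N = f ` N'" using hN by simp
    ultimately have "homeomorphic_map (subtopology S N) (subtopology T (g ` N)) g"
      by (metis homeomorphic_map_eq comp_apply g topspace_subtopology IntE)
    then show ?thesis using oN pN N'(3) gN by metis
  qed
  ultimately show ?thesis unfolding local_homeomorphism_map_def by blast
qed

section \<open>Germs in a pre-pseudogroup\<close>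

locale pre_pseudogroup_setting =
  fixes X :: "'a topology"
    and Mor :: "'m set" and dm cd :: "'m \<Rightarrow> 'a set"
    and cmp :: "'m \<Rightarrow> 'm \<Rightarrow> 'm" and ident :: "'a set \<Rightarrow> 'm"
    and incl :: "'a set \<Rightarrow> 'a set \<Rightarrow> 'm"
  assumes pre_pseudogroup: "pre_pseudogroup X Mor dm cd cmp ident incl"
begin

abbreviation "T \<equiv> topspace X"
abbreviation "Germ \<equiv> germ X Mor dm cd cmp incl"
abbreviation "Stalk \<equiv> stalk X Mor dm cd cmp incl"
abbreviation "Push \<equiv> push X Mor dm cd cmp incl"
abbreviation "Hom \<equiv> hom_star X Mor dm cd cmp incl"
abbreviation "Comp \<equiv> comp_star X Mor dm cd cmp incl"
abbreviation "Ident \<equiv> id_star X Mor dm cd cmp ident incl"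

lemma cat_on_opens: "cat_on_opens X Mor dm cd cmp ident"
  using pre_pseudogroup unfolding pre_pseudogroup_def by blast

lemma contains_Xtop: "contains_Xtop X Mor dm cd cmp ident incl"
  using pre_pseudogroup unfolding pre_pseudogroup_def by blast

lemma
  shows openin_dm: "f \<in> Mor \<Longrightarrow> openin X (dm f)"
    and openin_cd: "f \<in> Mor \<Longrightarrow> openin X (cd f)"
  using cat_on_opens[unfolded cat_on_opens_def, THEN conjunct1] by blast+

lemma dm_subset: "f \<in> Mor \<Longrightarrow> dm f \<subseteq> T"
  using openin_dm openin_subset by blast

lemma cmp_closed:
  assumes "f \<in> Mor" "g \<in> Mor" "cd f = dm g"
  shows "cmp g f \<in> Mor" "dm (cmp g f) = dm f" "cd (cmp g f) = cd g"
  using assms cat_on_opens[unfolded cat_on_opens_def, THEN conjunct2, THEN conjunct1] by blast+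

lemma cmp_assoc:
  "\<lbrakk>f \<in> Mor; g \<in> Mor; h \<in> Mor; cd f = dm g; cd g = dm h\<rbrakk>
     \<Longrightarrow> cmp h (cmp g f) = cmp (cmp h g) f"
  using cat_on_opens[unfolded cat_on_opens_def, THEN conjunct2, THEN conjunct2, THEN conjunct1]
  by blast

lemma ident_closed:
  assumes "openin X U"
  shows "ident U \<in> Mor" "dm (ident U) = U" "cd (ident U) = U"
  using assms
    cat_on_opens[unfolded cat_on_opens_def, THEN conjunct2, THEN conjunct2, THEN conjunct2, THEN conjunct1]
  by blast+

lemma
  assumes "f \<in> Mor"
  shows cmp_ident_left: "cmp (ident (cd f)) f = f"
    and cmp_ident_right: "cmp f (ident (dm f)) = f"
  using assms
    cat_on_opens[unfolded cat_on_opens_def, THEN conjunct2, THEN conjunct2, THEN conjunct2, THEN conjunct2]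
  by blast+

lemma incl_closed:
  assumes "openin X U" "openin X V" "U \<subseteq> V"
  shows "incl U V \<in> Mor" "dm (incl U V) = U" "cd (incl U V) = V"
  using assms contains_Xtop[unfolded contains_Xtop_def, THEN conjunct1] by blast+

lemma incl_self: "openin X U \<Longrightarrow> incl U U = ident U"
  using contains_Xtop[unfolded contains_Xtop_def, THEN conjunct2, THEN conjunct1] by blast

lemma cmp_incl_incl:
  "\<lbrakk>openin X U; openin X V; openin X W; U \<subseteq> V; V \<subseteq> W\<rbrakk>
     \<Longrightarrow> cmp (incl V W) (incl U V) = incl U W"
  using contains_Xtop[unfolded contains_Xtop_def, THEN conjunct2, THEN conjunct2] by blast

lemma projections_bij:
  "\<lbrakk>openin X V; x \<in> T\<rbrakk> \<Longrightarrow> bij_betw (\<lambda>(y, \<phi>). \<phi> V) (SIGMA y:V. Hom x y) (Stalk x V)"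
  using pre_pseudogroup[unfolded pre_pseudogroup_def, THEN conjunct2, THEN conjunct2, THEN conjunct1]
  by blast

lemma groupoid:
  "\<lbrakk>x \<in> T; y \<in> T; \<phi> \<in> Hom x y\<rbrakk>
     \<Longrightarrow> \<exists>\<psi>\<in>Hom y x. Comp x x \<psi> \<phi> = Ident x \<and> Comp y y \<phi> \<psi> = Ident y"
  using pre_pseudogroup[unfolded pre_pseudogroup_def, THEN conjunct2, THEN conjunct2, THEN conjunct2]
  by blast

definition res :: "'m \<Rightarrow> 'a set \<Rightarrow> 'm" where
  "res f W = cmp f (incl W (dm f))"

lemma res_closed:
  assumes "f \<in> Mor" "openin X W" "W \<subseteq> dm f"
  shows "res f W \<in> Mor" "dm (res f W) = W" "cd (res f W) = cd f"
  using assms cmp_closed[of "incl W (dm f)" f] incl_closed[of W "dm f"] openin_dm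
  unfolding res_def by auto

lemma res_res:
  assumes f: "f \<in> Mor" and W: "openin X W" "W \<subseteq> dm f" and W': "openin X W'" "W' \<subseteq> W"
  shows "res (res f W) W' = res f W'"
proof -
  have oD: "openin X (dm f)" using f by (rule openin_dm)
  note i1 = incl_closed[OF W(1) oD W(2)] and i2 = incl_closed[OF W'(1) W(1) W'(2)]
  have "res (res f W) W' = cmp (cmp f (incl W (dm f))) (incl W' W)"
    using res_closed(2)[OF f W] unfolding res_def by simp
  also have "\<dots> = cmp f (cmp (incl W (dm f)) (incl W' W))"
    using cmp_assoc[of "incl W' W" "incl W (dm f)" f] i1 i2 f by simp
  also have "cmp (incl W (dm f)) (incl W' W) = incl W' (dm f)"
    using cmp_incl_incl[OF W'(1) W(1) oD W'(2) W(2)] .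
  finally show ?thesis unfolding res_def .
qed

lemma res_cmp:
  assumes "f \<in> Mor" "h \<in> Mor" "cd f = dm h" "openin X W" "W \<subseteq> dm f"
  shows "res (cmp h f) W = cmp h (res f W)"
proof -
  have "dm (cmp h f) = dm f" using cmp_closed assms by blast
  then show ?thesis unfolding res_def
    using cmp_assoc[of "incl W (dm f)" f h] incl_closed[OF assms(4) openin_dm[OF assms(1)] assms(5)]
      assms by simp
qed

definition agree_near :: "'a \<Rightarrow> 'm \<Rightarrow> 'm \<Rightarrow> bool" where
  "agree_near x f g \<longleftrightarrow> (\<exists>W. openin X W \<and> x \<in> W \<and> W \<subseteq> dm f \<inter> dm g \<and> res f W = res g W)"

lemma germ_agree_near: "Germ x f = {g \<in> Mor. cd g = cd f \<and> x \<in> dm g \<and> agree_near x f g}"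
  unfolding germ_def agree_near_def res_def by auto

lemma agree_near_refl: "\<lbrakk>f \<in> Mor; x \<in> dm f\<rbrakk> \<Longrightarrow> agree_near x f f"
  unfolding agree_near_def using openin_dm by auto

lemma agree_near_sym: "agree_near x f g \<Longrightarrow> agree_near x g f"
  unfolding agree_near_def by auto

lemma agree_near_trans:
  assumes "f \<in> Mor" "g \<in> Mor" "h \<in> Mor" "agree_near x f g" "agree_near x g h"
  shows "agree_near x f h"
proof -
  obtain W1 where W1: "openin X W1" "x \<in> W1" "W1 \<subseteq> dm f \<inter> dm g" "res f W1 = res g W1"
    using assms(4) unfolding agree_near_def by auto
  obtain W2 where W2: "openin X W2" "x \<in> W2" "W2 \<subseteq> dm g \<inter> dm h" "res g W2 = res h W2"
    using assms(5) unfolding agree_near_def by auto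
  define W where "W = W1 \<inter> W2"
  have oW: "openin X W" using W1 W2 W_def by auto
  have "res f W = res (res f W1) W" using res_res[of f W1 W] W1 oW W_def assms by auto
  also have "\<dots> = res (res g W1) W" using W1 by simp
  also have "\<dots> = res g W" using res_res[of g W1 W] W1 oW W_def assms by auto
  also have "\<dots> = res (res g W2) W" using res_res[of g W2 W] W2 oW W_def assms by auto
  also have "\<dots> = res (res h W2) W" using W2 by simp
  also have "\<dots> = res h W" using res_res[of h W2 W] W2 oW W_def assms by auto
  finally have "res f W = res h W" .
  moreover have "x \<in> W" "W \<subseteq> dm f \<inter> dm h" using W1 W2 W_def by auto
  ultimately show ?thesis unfolding agree_near_def using oW by blast
qed

lemma agree_near_cmp:
  assumes "f1 \<in> Mor" "f2 \<in> Mor" "h \<in> Mor" "cd f1 = dm h" "cd f2 = dm h" "agree_near x f1 f2"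
  shows "agree_near x (cmp h f1) (cmp h f2)"
proof -
  obtain W where W: "openin X W" "x \<in> W" "W \<subseteq> dm f1 \<inter> dm f2" "res f1 W = res f2 W"
    using assms(6) unfolding agree_near_def by auto
  then show ?thesis unfolding agree_near_def
    using res_cmp[of f1 h W] res_cmp[of f2 h W] assms cmp_closed by (intro exI[of _ W]) auto
qed

lemma germ_self: "\<lbrakk>f \<in> Mor; x \<in> dm f\<rbrakk> \<Longrightarrow> f \<in> Germ x f"
  unfolding germ_agree_near using agree_near_refl by auto

lemma germ_eq_iff:
  assumes "f \<in> Mor" "g \<in> Mor" "cd g = cd f" "x \<in> dm f" "x \<in> dm g"
  shows "Germ x f = Germ x g \<longleftrightarrow> agree_near x f g"
proof
  assume "Germ x f = Germ x g"
  then have "f \<in> Germ x g" using germ_self assms by auto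
  then show "agree_near x f g" unfolding germ_agree_near by (auto intro: agree_near_sym)
next
  assume "agree_near x f g"
  then show "Germ x f = Germ x g" unfolding germ_agree_near using assms
    by (auto intro: agree_near_sym agree_near_trans)
qed

lemma mem_germ_iff:
  assumes "f \<in> Mor" "x \<in> dm f"
  shows "g \<in> Germ x f \<longleftrightarrow> g \<in> Mor \<and> cd g = cd f \<and> x \<in> dm g \<and> Germ x g = Germ x f"
  using germ_eq_iff[of g f x] assms unfolding germ_agree_near by (auto intro: agree_near_sym)

lemma germ_eq_near:
  assumes "f \<in> Mor" "g \<in> Mor" "cd g = cd f" "x \<in> dm f" "x \<in> dm g" "Germ x f = Germ x g"
  obtains A where "openin X A" "x \<in> A" "A \<subseteq> dm f \<inter> dm g"
    "\<And>x'. x' \<in> A \<Longrightarrow> Germ x' f = Germ x' g"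
proof -
  have "agree_near x f g" using germ_eq_iff[OF assms(1-5)] assms(6) by blast
  then obtain W where W: "openin X W" "x \<in> W" "W \<subseteq> dm f \<inter> dm g" "res f W = res g W"
    unfolding agree_near_def by blast
  have "Germ x' f = Germ x' g" if "x' \<in> W" for x'
  proof -
    have "agree_near x' f g" unfolding agree_near_def using W that by blast
    then show ?thesis using germ_eq_iff[OF assms(1-3)] W(3) that by blast
  qed
  then show ?thesis using W that by blast
qed

lemma germ_res:
  assumes "f \<in> Mor" "openin X W" "W \<subseteq> dm f" "x \<in> W"
  shows "Germ x (res f W) = Germ x f"
proof -
  have "agree_near x f (res f W)"
    unfolding agree_near_def using assms res_closed[OF assms(1-3)] res_res[OF assms(1-3,2) order_refl]
    by (intro exI[of _ W]) auto
  then show ?thesis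
    using germ_eq_iff[of f "res f W" x] res_closed[OF assms(1-3)] assms by auto
qed

lemma germ_cmp:
  assumes "f1 \<in> Mor" "f2 \<in> Mor" "h \<in> Mor" "cd f1 = dm h" "cd f2 = dm h"
    "x \<in> dm f1" "x \<in> dm f2" "Germ x f1 = Germ x f2"
  shows "Germ x (cmp h f1) = Germ x (cmp h f2)"
  using assms germ_eq_iff[of f1 f2 x] germ_eq_iff[of "cmp h f1" "cmp h f2" x]
    agree_near_cmp[of f1 f2 h x] cmp_closed
  by auto

section \<open>The groupoid of arrows\<close>

lemma mem_stalk_iff: "s \<in> Stalk x V \<longleftrightarrow> (\<exists>f. f \<in> Mor \<and> cd f = V \<and> x \<in> dm f \<and> s = Germ x f)"
  unfolding stalk_def mem_Collect_eq by (intro ex_cong1) auto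

lemma push_germ:
  assumes "f \<in> Mor" "cd f = V" "openin X V'" "V \<subseteq> V'" "x \<in> dm f"
  shows "Push x V V' (Germ x f) = Germ x (cmp (incl V V') f)"
proof -
  have i: "incl V V' \<in> Mor" "dm (incl V V') = V" "cd (incl V V') = V'"
    using incl_closed[OF _ assms(3,4)] openin_cd[OF assms(1)] assms(2) by auto
  have eq: "Germ x (cmp (incl V V') f') = Germ x (cmp (incl V V') f)" if "f' \<in> Germ x f" for f'
  proof -
    have "f' \<in> Mor" "cd f' = V" "x \<in> dm f'" "Germ x f' = Germ x f"
      using that mem_germ_iff[OF assms(1,5)] assms(2) by auto
    then show ?thesis using germ_cmp[of f' f "incl V V'" x] i assms by auto
  qed
  show ?thesis
    unfolding push_def by (rule UN_constant_eq[OF germ_self[OF assms(1,5)]]) (use eq in blast)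
qed

lemma hom_starI:
  assumes "\<And>V. \<lbrakk>openin X V; y \<in> V\<rbrakk> \<Longrightarrow> \<phi> V \<in> Stalk x V"
    and "\<And>V V'. \<lbrakk>openin X V; openin X V'; y \<in> V; V \<subseteq> V'\<rbrakk> \<Longrightarrow> Push x V V' (\<phi> V) = \<phi> V'"
    and "\<And>V. \<not> (openin X V \<and> y \<in> V) \<Longrightarrow> \<phi> V = {}"
  shows "\<phi> \<in> Hom x y"
  unfolding hom_star_def mem_Collect_eq using assms by blast

lemma hom_star_stalk: "\<lbrakk>\<phi> \<in> Hom x y; openin X V; y \<in> V\<rbrakk> \<Longrightarrow> \<phi> V \<in> Stalk x V"
  unfolding hom_star_def mem_Collect_eq by (elim conjE allE impE) auto

lemma hom_star_push:
  "\<lbrakk>\<phi> \<in> Hom x y; openin X V; openin X V'; y \<in> V; V \<subseteq> V'\<rbrakk> \<Longrightarrow> Push x V V' (\<phi> V) = \<phi> V'"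
  unfolding hom_star_def mem_Collect_eq by (elim conjE) (drule spec[of _ V], drule spec[of _ V'], simp)

lemma hom_star_outside: "\<lbrakk>\<phi> \<in> Hom x y; \<not> (openin X V \<and> y \<in> V)\<rbrakk> \<Longrightarrow> \<phi> V = {}"
  unfolding hom_star_def mem_Collect_eq by (elim conjE) (drule spec[of _ V], simp)

lemma hom_star_rep:
  assumes "\<phi> \<in> Hom x y" "openin X V" "y \<in> V"
  obtains f where "f \<in> Mor" "cd f = V" "x \<in> dm f" "\<phi> V = Germ x f"
  using hom_star_stalk[OF assms] unfolding mem_stalk_iff by blast

lemma hom_star_memD:
  assumes "\<phi> \<in> Hom x y" "openin X V" "y \<in> V" "f \<in> \<phi> V"
  shows "f \<in> Mor" "cd f = V" "x \<in> dm f" "\<phi> V = Germ x f"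
proof -
  obtain f0 where f0: "f0 \<in> Mor" "cd f0 = V" "x \<in> dm f0" "\<phi> V = Germ x f0"
    using hom_star_rep[OF assms(1-3)] by blast
  then show "f \<in> Mor" "cd f = V" "x \<in> dm f" "\<phi> V = Germ x f"
    using mem_germ_iff[OF f0(1,3), of f] assms(4) by auto
qed

lemma hom_star_some_mem:
  assumes "\<phi> \<in> Hom x y" "openin X V" "y \<in> V"
  obtains f where "f \<in> \<phi> V"
proof -
  obtain f where "f \<in> Mor" "x \<in> dm f" "\<phi> V = Germ x f"
    using hom_star_rep[OF assms] by blast
  then show ?thesis using germ_self that by auto
qed

lemma hom_star_push_germ:
  assumes "\<phi> \<in> Hom x y" "y \<in> V" "V \<subseteq> V'" "openin X V'"
    and "f \<in> Mor" "cd f = V" "x \<in> dm f" "\<phi> V = Germ x f"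
  shows "\<phi> V' = Germ x (cmp (incl V V') f)"
  using hom_star_push[OF assms(1) _ assms(4,2,3)] openin_cd[OF assms(5)] push_germ[OF assms(5-6,4,3,7)]
    assms(6,8) by simp

lemma hom_star_unique:
  assumes "x \<in> T" "openin X V" "y \<in> V" "y' \<in> V" "\<phi> \<in> Hom x y" "\<phi>' \<in> Hom x y'"
    "\<phi> V = \<phi>' V"
  shows "y = y' \<and> \<phi> = \<phi>'"
proof -
  have "inj_on (\<lambda>(y, \<phi>). \<phi> V) (SIGMA y:V. Hom x y)"
    using projections_bij[OF assms(2,1)] unfolding bij_betw_def by blast
  then show ?thesis using assms unfolding inj_on_def by blast
qed

lemma hom_star_exists:
  assumes "f \<in> Mor" "x \<in> dm f"
  obtains y \<phi> where "y \<in> cd f" "\<phi> \<in> Hom x y" "\<phi> (cd f) = Germ x f"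
proof -
  have xT: "x \<in> T" using dm_subset[OF assms(1)] assms(2) by blast
  have im: "(\<lambda>(y, \<phi>). \<phi> (cd f)) ` (SIGMA y:cd f. Hom x y) = Stalk x (cd f)"
    using projections_bij[OF openin_cd[OF assms(1)] xT] unfolding bij_betw_def by (rule conjunct2)
  have "Germ x f \<in> Stalk x (cd f)" unfolding mem_stalk_iff using assms by blast
  then have "Germ x f \<in> (\<lambda>(y, \<phi>). \<phi> (cd f)) ` (SIGMA y:cd f. Hom x y)" unfolding im .
  then obtain p where p: "p \<in> (SIGMA y:cd f. Hom x y)" "Germ x f = (\<lambda>(y, \<phi>). \<phi> (cd f)) p"
    by (rule imageE)
  obtain y \<phi> where "p = (y, \<phi>)" by (cases p)
  then show ?thesis using p that[of y \<phi>] by simp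
qed

definition widen :: "'m \<Rightarrow> 'm" where
  "widen f = cmp (incl (cd f) T) f"

lemma widen_closed:
  assumes "f \<in> Mor"
  shows "widen f \<in> Mor" "dm (widen f) = dm f" "cd (widen f) = T"
  using cmp_closed[of f "incl (cd f) T"] incl_closed[OF openin_cd[OF assms] openin_topspace]
    openin_subset[OF openin_cd[OF assms]] assms
  unfolding widen_def by auto

lemma hom_star_widen_iff:
  assumes f: "f \<in> Mor" "x \<in> dm f" and \<phi>: "\<phi> \<in> Hom x y" "y \<in> T"
  shows "\<phi> T = Germ x (widen f) \<longleftrightarrow> y \<in> cd f \<and> \<phi> (cd f) = Germ x f"
proof
  assume e: "\<phi> T = Germ x (widen f)"
  obtain y' \<phi>' where \<phi>': "y' \<in> cd f" "\<phi>' \<in> Hom x y'" "\<phi>' (cd f) = Germ x f"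
    using hom_star_exists[OF f] by blast
  have "\<phi>' T = Germ x (widen f)"
    unfolding widen_def
    using hom_star_push_germ[OF \<phi>'(2,1) openin_subset[OF openin_cd] openin_topspace f(1) refl f(2)
        \<phi>'(3)] f(1) .
  then have "y' = y \<and> \<phi>' = \<phi>"
    using hom_star_unique[OF _ openin_topspace _ \<phi>(2) \<phi>'(2) \<phi>(1)] e dm_subset[OF f(1)] f(2)
      openin_subset[OF openin_cd[OF f(1)]] \<phi>'(1) by auto
  then show "y \<in> cd f \<and> \<phi> (cd f) = Germ x f" using \<phi>' by auto
next
  assume "y \<in> cd f \<and> \<phi> (cd f) = Germ x f"
  then show "\<phi> T = Germ x (widen f)"
    unfolding widen_def
    using hom_star_push_germ[OF \<phi>(1) _ openin_subset[OF openin_cd] openin_topspace f(1) refl f(2)] f(1)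
    by blast
qed

lemma germ_cmp_via_res:
  assumes \<phi>: "\<phi> \<in> Hom x y" and g: "g \<in> Mor" "y \<in> dm g"
    and f: "f \<in> Mor" "cd f = dm g" "x \<in> dm f" "\<phi> (dm g) = Germ x f"
    and U: "openin X U" "y \<in> U" "U \<subseteq> dm g"
    and k: "k \<in> Mor" "cd k = U" "x \<in> dm k" "\<phi> U = Germ x k"
  shows "Germ x (cmp g f) = Germ x (cmp (res g U) k)"
proof -
  note i = incl_closed[OF U(1) openin_dm[OF g(1)] U(3)]
  define k' where "k' = cmp (incl U (dm g)) k"
  have k': "k' \<in> Mor" "cd k' = dm g" "dm k' = dm k"
    using cmp_closed[of k "incl U (dm g)"] i k unfolding k'_def by auto
  have "Germ x f = Germ x k'"
    using hom_star_push_germ[OF \<phi> U(2,3) openin_dm[OF g(1)] k] f(4) unfolding k'_def by simp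
  then have "Germ x (cmp g f) = Germ x (cmp g k')"
    using germ_cmp[of f k' g x] k' f g k(3) by auto
  also have "cmp g k' = cmp (res g U) k"
    unfolding k'_def res_def using cmp_assoc[of k "incl U (dm g)" g] i g k by simp
  finally show ?thesis .
qed

text \<open>Two representatives of the W-component agree on a neighbourhood U of y, and both
  composites factor through a single representative of the U-component.\<close>

lemma comp_star_rep_indep:
  assumes \<phi>: "\<phi> \<in> Hom x y" and \<psi>: "\<psi> \<in> Hom y z" and W: "openin X W" "z \<in> W"
    and "g \<in> \<psi> W" "f \<in> \<phi> (dm g)" "g' \<in> \<psi> W" "f' \<in> \<phi> (dm g')"
  shows "Germ x (cmp g f) = Germ x (cmp g' f')"
proof -
  have g: "g \<in> Mor" "cd g = W" "y \<in> dm g" "\<psi> W = Germ y g"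
    using hom_star_memD[OF \<psi> W assms(5)] by auto
  have g': "g' \<in> Mor" "cd g' = W" "y \<in> dm g'" "\<psi> W = Germ y g'"
    using hom_star_memD[OF \<psi> W assms(7)] by auto
  have f: "f \<in> Mor" "cd f = dm g" "x \<in> dm f" "\<phi> (dm g) = Germ x f"
    using hom_star_memD[OF \<phi> openin_dm[OF g(1)] g(3) assms(6)] by auto
  have f': "f' \<in> Mor" "cd f' = dm g'" "x \<in> dm f'" "\<phi> (dm g') = Germ x f'"
    using hom_star_memD[OF \<phi> openin_dm[OF g'(1)] g'(3) assms(8)] by auto
  have "agree_near y g g'" using germ_eq_iff[of g g' y] g g' by auto
  then obtain U where U: "openin X U" "y \<in> U" "U \<subseteq> dm g \<inter> dm g'" "res g U = res g' U"
    unfolding agree_near_def by blast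
  obtain k where k: "k \<in> Mor" "cd k = U" "x \<in> dm k" "\<phi> U = Germ x k"
    using hom_star_rep[OF \<phi> U(1,2)] by blast
  have "Germ x (cmp g f) = Germ x (cmp (res g U) k)"
    using germ_cmp_via_res[OF \<phi> g(1,3) f U(1,2) _ k] U(3) by blast
  also have "\<dots> = Germ x (cmp g' f')"
    using germ_cmp_via_res[OF \<phi> g'(1,3) f' U(1,2) _ k] U(3,4) by auto
  finally show ?thesis .
qed

lemma comp_star_germ:
  assumes "\<phi> \<in> Hom x y" "\<psi> \<in> Hom y z" "openin X W" "z \<in> W" "g \<in> \<psi> W" "f \<in> \<phi> (dm g)"
  shows "Comp x z \<psi> \<phi> W = Germ x (cmp g f)"
proof -
  have "Comp x z \<psi> \<phi> W = \<Union>{Germ x (cmp g' f') | g' f'. g' \<in> \<psi> W \<and> f' \<in> \<phi> (dm g')}"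
    unfolding comp_star_def using assms(3,4) by simp
  also have "\<dots> = Germ x (cmp g f)"
    using comp_star_rep_indep[OF assms(1-6)] assms(5,6) by blast
  finally show ?thesis .
qed

lemma comp_star_outside: "\<not> (openin X W \<and> z \<in> W) \<Longrightarrow> Comp x z \<psi> \<phi> W = {}"
  unfolding comp_star_def by (simp only: if_not_P if_False)

lemma id_star_germ: "\<lbrakk>openin X W; x \<in> W\<rbrakk> \<Longrightarrow> Ident x W = Germ x (ident W)"
  unfolding id_star_def by simp

lemma id_star_outside: "\<not> (openin X W \<and> x \<in> W) \<Longrightarrow> Ident x W = {}"
  unfolding id_star_def by (simp only: if_not_P if_False)

lemma comp_star_hom:
  assumes \<phi>: "\<phi> \<in> Hom x y" and \<psi>: "\<psi> \<in> Hom y z"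
  shows "Comp x z \<psi> \<phi> \<in> Hom x z"
proof (rule hom_starI)
  fix W assume W: "openin X W" "z \<in> W"
  obtain g where g0: "g \<in> \<psi> W" using hom_star_some_mem[OF \<psi> W] by blast
  note g = hom_star_memD[OF \<psi> W g0]
  obtain f where f0: "f \<in> \<phi> (dm g)" using hom_star_some_mem[OF \<phi> openin_dm[OF g(1)] g(3)] by blast
  note f = hom_star_memD[OF \<phi> openin_dm[OF g(1)] g(3) f0]
  show "Comp x z \<psi> \<phi> W \<in> Stalk x W"
    unfolding comp_star_germ[OF \<phi> \<psi> W g0 f0] mem_stalk_iff using cmp_closed[of f g] f g by auto
next
  fix W W' assume W: "openin X W" "openin X W'" "z \<in> W" "W \<subseteq> W'"
  obtain g where g0: "g \<in> \<psi> W" using hom_star_some_mem[OF \<psi> W(1,3)] by blast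
  note g = hom_star_memD[OF \<psi> W(1,3) g0]
  obtain f where f0: "f \<in> \<phi> (dm g)" using hom_star_some_mem[OF \<phi> openin_dm[OF g(1)] g(3)] by blast
  note f = hom_star_memD[OF \<phi> openin_dm[OF g(1)] g(3) f0]
  note i = incl_closed[OF W(1,2,4)]
  define g' where "g' = cmp (incl W W') g"
  have g': "g' \<in> Mor" "dm g' = dm g" "cd g' = W'"
    using cmp_closed[of g "incl W W'"] i g unfolding g'_def by auto
  have "\<psi> W' = Germ y g'" unfolding g'_def using hom_star_push_germ[OF \<psi> W(3,4,2) g] .
  then have g'0: "g' \<in> \<psi> W'" using germ_self[OF g'(1)] g'(2) g(3) by auto
  have "Push x W W' (Comp x z \<psi> \<phi> W) = Germ x (cmp (incl W W') (cmp g f))"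
    using comp_star_germ[OF \<phi> \<psi> W(1,3) g0 f0] push_germ[of "cmp g f" W W' x] cmp_closed[of f g] f g W
    by auto
  also have "cmp (incl W W') (cmp g f) = cmp g' f"
    unfolding g'_def using cmp_assoc[of f g "incl W W'"] f g i by simp
  also have "Germ x (cmp g' f) = Comp x z \<psi> \<phi> W'"
    using comp_star_germ[OF \<phi> \<psi> W(2) _ g'0] f0 g'(2) W by auto
  finally show "Push x W W' (Comp x z \<psi> \<phi> W) = Comp x z \<psi> \<phi> W'" .
qed (rule comp_star_outside)

lemma id_star_hom:
  assumes "x \<in> T"
  shows "Ident x \<in> Hom x x"
proof (rule hom_starI)
  fix W assume W: "openin X W" "x \<in> W"
  show "Ident x W \<in> Stalk x W"
    unfolding id_star_germ[OF W] mem_stalk_iff using ident_closed[OF W(1)] W by auto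
next
  fix W W' assume W: "openin X W" "openin X W'" "x \<in> W" "W \<subseteq> W'"
  note i = incl_closed[OF W(1,2,4)]
  have "Push x W W' (Ident x W) = Germ x (cmp (incl W W') (ident W))"
    unfolding id_star_germ[OF W(1,3)] using push_germ[of "ident W" W W' x] ident_closed[OF W(1)] W
    by auto
  also have "cmp (incl W W') (ident W) = incl W W'" using cmp_ident_right[OF i(1)] i by simp
  also have "Germ x (incl W W') = Germ x (ident W')"
  proof -
    have "res (incl W W') W = incl W W'"
      unfolding res_def i(2) incl_self[OF W(1)] using cmp_ident_right[OF i(1)] i by simp
    moreover have "res (ident W') W = incl W W'"
      unfolding res_def ident_closed[OF W(2)] using cmp_ident_left[OF i(1)] i by simp
    ultimately have "agree_near x (incl W W') (ident W')"
      unfolding agree_near_def using W i ident_closed[OF W(2)] by (intro exI[of _ W]) auto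
    then show ?thesis using germ_eq_iff[of "incl W W'" "ident W'" x] i ident_closed[OF W(2)] W by auto
  qed
  finally show "Push x W W' (Ident x W) = Ident x W'" using id_star_germ[OF W(2)] W by auto
qed (rule id_star_outside)

lemma comp_star_id_right:
  assumes \<psi>: "\<psi> \<in> Hom y z" and y: "y \<in> T"
  shows "Comp y z \<psi> (Ident y) = \<psi>"
proof
  fix W show "Comp y z \<psi> (Ident y) W = \<psi> W"
  proof (cases "openin X W \<and> z \<in> W")
    case True
    obtain g where g0: "g \<in> \<psi> W" using hom_star_some_mem[OF \<psi>] True by blast
    have g: "g \<in> Mor" "y \<in> dm g" "\<psi> W = Germ y g" using hom_star_memD[OF \<psi> _ _ g0] True by auto
    have "ident (dm g) \<in> Ident y (dm g)"
      unfolding id_star_germ[OF openin_dm[OF g(1)] g(2)]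
      using germ_self ident_closed[OF openin_dm[OF g(1)]] g by auto
    then have "Comp y z \<psi> (Ident y) W = Germ y (cmp g (ident (dm g)))"
      using comp_star_germ[OF id_star_hom[OF y] \<psi> _ _ g0] True by auto
    then show ?thesis using cmp_ident_right[OF g(1)] g by simp
  next
    case False
    then show ?thesis using hom_star_outside[OF \<psi> False] comp_star_outside[OF False] by simp
  qed
qed

lemma comp_star_id_left:
  assumes \<phi>: "\<phi> \<in> Hom x y" and y: "y \<in> T"
  shows "Comp x y (Ident y) \<phi> = \<phi>"
proof
  fix W show "Comp x y (Ident y) \<phi> W = \<phi> W"
  proof (cases "openin X W \<and> y \<in> W")
    case True
    have i0: "ident W \<in> Ident y W"
      unfolding id_star_germ[OF True[THEN conjunct1] True[THEN conjunct2]]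
      using germ_self ident_closed True by auto
    obtain f where f0: "f \<in> \<phi> W" using hom_star_some_mem[OF \<phi>] True by blast
    have f: "f \<in> Mor" "cd f = W" "\<phi> W = Germ x f" using hom_star_memD[OF \<phi> _ _ f0] True by auto
    have "f \<in> \<phi> (dm (ident W))" using f0 ident_closed True by simp
    then have "Comp x y (Ident y) \<phi> W = Germ x (cmp (ident W) f)"
      using comp_star_germ[OF \<phi> id_star_hom[OF y] _ _ i0] True by auto
    then show ?thesis using cmp_ident_left[OF f(1)] f by simp
  next
    case False
    then show ?thesis using hom_star_outside[OF \<phi> False] comp_star_outside[OF False] by simp
  qed
qed

lemma comp_star_assoc:
  assumes \<phi>: "\<phi> \<in> Hom x y" and \<psi>: "\<psi> \<in> Hom y z" and \<xi>: "\<xi> \<in> Hom z w"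
  shows "Comp x w \<xi> (Comp x z \<psi> \<phi>) = Comp x w (Comp y w \<xi> \<psi>) \<phi>"
proof
  fix W show "Comp x w \<xi> (Comp x z \<psi> \<phi>) W = Comp x w (Comp y w \<xi> \<psi>) \<phi> W"
  proof (cases "openin X W \<and> w \<in> W")
    case True
    obtain h where h0: "h \<in> \<xi> W" using hom_star_some_mem[OF \<xi>] True by blast
    have h: "h \<in> Mor" "cd h = W" "z \<in> dm h" using hom_star_memD[OF \<xi> _ _ h0] True by auto
    note oh = openin_dm[OF h(1)]
    obtain g where g0: "g \<in> \<psi> (dm h)" using hom_star_some_mem[OF \<psi> oh h(3)] by blast
    have g: "g \<in> Mor" "cd g = dm h" "y \<in> dm g" using hom_star_memD[OF \<psi> oh h(3) g0] by auto
    note og = openin_dm[OF g(1)]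
    obtain f where f0: "f \<in> \<phi> (dm g)" using hom_star_some_mem[OF \<phi> og g(3)] by blast
    have f: "f \<in> Mor" "cd f = dm g" "x \<in> dm f" using hom_star_memD[OF \<phi> og g(3) f0] by auto
    have hg: "cmp h g \<in> Mor" "dm (cmp h g) = dm g" using cmp_closed[of g h] g h by auto
    have gf: "cmp g f \<in> Mor" "dm (cmp g f) = dm f" using cmp_closed[of f g] g f by auto
    have "Comp y w \<xi> \<psi> W = Germ y (cmp h g)" using comp_star_germ[OF \<psi> \<xi> _ _ h0 g0] True by auto
    then have hg0: "cmp h g \<in> Comp y w \<xi> \<psi> W" using germ_self hg g by auto
    have "Comp x z \<psi> \<phi> (dm h) = Germ x (cmp g f)" using comp_star_germ[OF \<phi> \<psi> oh h(3) g0 f0] .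
    then have gf0: "cmp g f \<in> Comp x z \<psi> \<phi> (dm h)" using germ_self gf f by auto
    have "Comp x w \<xi> (Comp x z \<psi> \<phi>) W = Germ x (cmp h (cmp g f))"
      using comp_star_germ[OF comp_star_hom[OF \<phi> \<psi>] \<xi> _ _ h0 gf0] True by auto
    also have "\<dots> = Germ x (cmp (cmp h g) f)" using cmp_assoc[of f g h] f g h by simp
    also have "\<dots> = Comp x w (Comp y w \<xi> \<psi>) \<phi> W"
      using comp_star_germ[OF \<phi> comp_star_hom[OF \<psi> \<xi>] _ _ hg0] True f0 hg by auto
    finally show ?thesis .
  next
    case False
    then show ?thesis using comp_star_outside[OF False] by simp
  qed
qed

lemma left_inverse_eq_right_inverse:
  assumes \<phi>: "\<phi> \<in> Hom x y" and xy: "x \<in> T" "y \<in> T" and \<psi>: "\<psi> \<in> Hom y x" and \<theta>: "\<theta> \<in> Hom y x"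
    and left: "Comp x x \<psi> \<phi> = Ident x" and right: "Comp y y \<phi> \<theta> = Ident y"
  shows "\<psi> = \<theta>"
proof -
  have "\<psi> = Comp y x \<psi> (Ident y)" using comp_star_id_right[OF \<psi> xy(2)] by simp
  also have "\<dots> = Comp y x \<psi> (Comp y y \<phi> \<theta>)" using right by simp
  also have "\<dots> = Comp y x (Comp x x \<psi> \<phi>) \<theta>" using comp_star_assoc[OF \<theta> \<phi> \<psi>] .
  also have "\<dots> = \<theta>" using left comp_star_id_left[OF \<theta> xy(1)] by simp
  finally show ?thesis .
qed

abbreviation "Arr \<equiv> mor_star X Mor dm cd cmp incl"
abbreviation "Arr_top \<equiv> mor_top X Mor dm cd cmp incl"
abbreviation "Inv \<equiv> inv_star X Mor dm cd cmp ident incl"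
abbreviation "Compose \<equiv> compose_star X Mor dm cd cmp incl"

lemma mem_Arr: "(x, y, \<phi>) \<in> Arr \<longleftrightarrow> x \<in> T \<and> y \<in> T \<and> \<phi> \<in> Hom x y"
  unfolding mor_star_def by simp

lemma inv_star_eqI:
  assumes p: "(x, y, \<phi>) \<in> Arr" and \<psi>: "\<psi> \<in> Hom y x" and left: "Comp x x \<psi> \<phi> = Ident x"
  shows "Inv (x, y, \<phi>) = (y, x, \<psi>)"
proof -
  have a: "x \<in> T" "y \<in> T" "\<phi> \<in> Hom x y" using p mem_Arr by auto
  obtain \<theta> where \<theta>: "\<theta> \<in> Hom y x" "Comp x x \<theta> \<phi> = Ident x" "Comp y y \<phi> \<theta> = Ident y"
    using groupoid[OF a] by blast
  have unique: "\<psi>' = \<theta>" if "\<psi>' \<in> Hom y x" "Comp x x \<psi>' \<phi> = Ident x" for \<psi>'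
    using left_inverse_eq_right_inverse[OF a(3,1,2) that(1) \<theta>(1) that(2) \<theta>(3)] .
  have "(THE \<psi>'. \<psi>' \<in> Hom y x \<and> Comp x x \<psi>' \<phi> = Ident x \<and> Comp y y \<phi> \<psi>' = Ident y) = \<theta>"
  proof (rule the_equality)
    show "\<theta> \<in> Hom y x \<and> Comp x x \<theta> \<phi> = Ident x \<and> Comp y y \<phi> \<theta> = Ident y"
      using \<theta> by blast
  next
    fix \<psi>' assume "\<psi>' \<in> Hom y x \<and> Comp x x \<psi>' \<phi> = Ident x \<and> Comp y y \<phi> \<psi>' = Ident y"
    then show "\<psi>' = \<theta>" using unique[of \<psi>'] by blast
  qed
  then show ?thesis unfolding inv_star_def using unique[OF \<psi> left] by simp
qed

lemma inv_starE:
  assumes p: "(x, y, \<phi>) \<in> Arr"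
  obtains \<psi> where "Inv (x, y, \<phi>) = (y, x, \<psi>)" "\<psi> \<in> Hom y x"
    "Comp x x \<psi> \<phi> = Ident x" "Comp y y \<phi> \<psi> = Ident y"
proof -
  have "x \<in> T" "y \<in> T" "\<phi> \<in> Hom x y" using p mem_Arr by auto
  then obtain \<psi> where \<psi>: "\<psi> \<in> Hom y x" "Comp x x \<psi> \<phi> = Ident x" "Comp y y \<phi> \<psi> = Ident y"
    using groupoid by blast
  show ?thesis using that[OF inv_star_eqI[OF p \<psi>(1,2)] \<psi>] .
qed

lemma inv_star_in_Arr:
  assumes "p \<in> Arr"
  shows "Inv p \<in> Arr"
proof -
  obtain x y \<phi> where p: "p = (x, y, \<phi>)" by (cases p)
  obtain \<psi> where "Inv p = (y, x, \<psi>)" "\<psi> \<in> Hom y x"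
    "Comp x x \<psi> \<phi> = Ident x" "Comp y y \<phi> \<psi> = Ident y"
    using assms unfolding p by (rule inv_starE)
  then show ?thesis using assms p mem_Arr by auto
qed

lemma inv_star_inv_star:
  assumes "p \<in> Arr"
  shows "Inv (Inv p) = p"
proof -
  obtain x y \<phi> where p: "p = (x, y, \<phi>)" by (cases p)
  obtain \<psi> where \<psi>: "Inv p = (y, x, \<psi>)" "\<psi> \<in> Hom y x"
    "Comp x x \<psi> \<phi> = Ident x" "Comp y y \<phi> \<psi> = Ident y"
    using assms unfolding p by (rule inv_starE)
  have "(y, x, \<psi>) \<in> Arr" using \<psi>(2) assms p mem_Arr by auto
  then have "Inv (y, x, \<psi>) = (x, y, \<phi>)" using assms p mem_Arr \<psi>(4) by (intro inv_star_eqI) auto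
  then show ?thesis using \<psi>(1) p by simp
qed

lemma tgt_star_eq_src_star_inv:
  assumes "p \<in> Arr"
  shows "tgt_star p = src_star (Inv p)"
proof -
  obtain x y \<phi> where p: "p = (x, y, \<phi>)" by (cases p)
  obtain \<psi> where "Inv p = (y, x, \<psi>)" "\<psi> \<in> Hom y x"
    "Comp x x \<psi> \<phi> = Ident x" "Comp y y \<phi> \<psi> = Ident y"
    using assms unfolding p by (rule inv_starE)
  then show ?thesis unfolding p tgt_star_def src_star_def by simp
qed

section \<open>The etale topology on arrows\<close>

definition basic_arrows :: "'m \<Rightarrow> ('a \<times> 'a \<times> ('a set \<Rightarrow> 'm set)) set" where
  "basic_arrows f = {(x, y, \<phi>) \<in> Arr. x \<in> dm f \<and> \<phi> T = Germ x f}"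

abbreviation "Basic_arrows \<equiv> {basic_arrows f | f. f \<in> Mor \<and> cd f = T}"

lemma Arr_top_eq:
  "Arr_top = subtopology (topology_generated_by Basic_arrows) Arr"
  unfolding mor_top_def basic_arrows_def ..

lemma mem_basic_arrows:
  "(x, y, \<phi>) \<in> basic_arrows f \<longleftrightarrow> (x, y, \<phi>) \<in> Arr \<and> x \<in> dm f \<and> \<phi> T = Germ x f"
  unfolding basic_arrows_def by simp

lemma basic_arrows_subset: "basic_arrows f \<subseteq> Arr"
  unfolding basic_arrows_def by auto

lemma Arr_covered_by_basic_arrows:
  assumes "p \<in> Arr"
  obtains f where "f \<in> Mor" "cd f = T" "p \<in> basic_arrows f"
proof -
  obtain x y \<phi> where p: "p = (x, y, \<phi>)" by (cases p)
  then have y: "y \<in> T" and \<phi>: "\<phi> \<in> Hom x y" using assms mem_Arr by auto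
  obtain f where "f \<in> Mor" "cd f = T" "x \<in> dm f" "\<phi> T = Germ x f"
    by (rule hom_star_rep[OF \<phi> openin_topspace y])
  then show ?thesis using that assms p mem_basic_arrows by blast
qed

lemma basic_arrows_res:
  assumes "f \<in> Mor" "openin X W" "W \<subseteq> dm f"
  shows "basic_arrows (res f W) = {p \<in> basic_arrows f. src_star p \<in> W}"
proof (rule set_eqI)
  fix p :: "'a \<times> 'a \<times> ('a set \<Rightarrow> 'm set)"
  obtain x y \<phi> where p: "p = (x, y, \<phi>)" by (cases p)
  show "p \<in> basic_arrows (res f W) \<longleftrightarrow> p \<in> {p \<in> basic_arrows f. src_star p \<in> W}"
  proof (cases "x \<in> W")
    case True
    then show ?thesis
      using germ_res[OF assms True] assms(3) res_closed(2)[OF assms]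
      by (auto simp: p mem_basic_arrows src_star_def)
  next
    case False
    then show ?thesis using res_closed(2)[OF assms] by (auto simp: p mem_basic_arrows src_star_def)
  qed
qed

lemma basic_arrows_refine:
  assumes f1: "f1 \<in> Mor" "cd f1 = T" and f2: "f2 \<in> Mor" "cd f2 = T"
    and p: "p \<in> basic_arrows f1" "p \<in> basic_arrows f2"
  obtains h where "h \<in> Mor" "cd h = T" "p \<in> basic_arrows h"
    "basic_arrows h \<subseteq> basic_arrows f1 \<inter> basic_arrows f2"
proof -
  obtain x y \<phi> where pp: "p = (x, y, \<phi>)" by (cases p)
  have x: "x \<in> dm f1" "x \<in> dm f2" "Germ x f1 = Germ x f2"
    using p unfolding pp mem_basic_arrows by auto
  have "cd f2 = cd f1" using f1(2) f2(2) by simp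
  then obtain A where A: "openin X A" "x \<in> A" "A \<subseteq> dm f1 \<inter> dm f2"
      "\<And>x'. x' \<in> A \<Longrightarrow> Germ x' f1 = Germ x' f2"
    by (rule germ_eq_near[OF f1(1) f2(1) _ x]) blast
  have Af1: "A \<subseteq> dm f1" using A(3) by blast
  have h: "res f1 A \<in> Mor" "cd (res f1 A) = T" using res_closed[OF f1(1) A(1) Af1] f1(2) by auto
  have B: "basic_arrows (res f1 A) = {p \<in> basic_arrows f1. src_star p \<in> A}"
    by (rule basic_arrows_res[OF f1(1) A(1) Af1])
  have "basic_arrows (res f1 A) \<subseteq> basic_arrows f2"
  proof
    fix q assume q: "q \<in> basic_arrows (res f1 A)"
    obtain x' y' \<phi>' where qq: "q = (x', y', \<phi>')" by (cases q)
    have "q \<in> Arr" "x' \<in> A" "\<phi>' T = Germ x' f1"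
      using q unfolding B qq by (auto simp: mem_basic_arrows src_star_def)
    then show "q \<in> basic_arrows f2" using A(3,4) unfolding qq mem_basic_arrows by auto
  qed
  moreover have "p \<in> basic_arrows (res f1 A)"
    unfolding B using p(1) A(2) unfolding pp src_star_def by simp
  ultimately show ?thesis using that[OF h] B by blast
qed

lemma Basic_arrows_subset: "b \<in> Basic_arrows \<Longrightarrow> b \<subseteq> Arr"
  using basic_arrows_subset by blast

lemma Basic_arrows_refine:
  assumes "b1 \<in> Basic_arrows" "b2 \<in> Basic_arrows" "p \<in> b1 \<inter> b2"
  shows "\<exists>b\<in>Basic_arrows. p \<in> b \<and> b \<subseteq> b1 \<inter> b2"
proof -
  obtain f1 where f1: "f1 \<in> Mor" "cd f1 = T" "b1 = basic_arrows f1" using assms(1) by blast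
  obtain f2 where f2: "f2 \<in> Mor" "cd f2 = T" "b2 = basic_arrows f2" using assms(2) by blast
  obtain h where "h \<in> Mor" "cd h = T" "p \<in> basic_arrows h"
      "basic_arrows h \<subseteq> basic_arrows f1 \<inter> basic_arrows f2"
    by (rule basic_arrows_refine[OF f1(1,2) f2(1,2)]) (use assms(3) f1(3) f2(3) in blast)+
  then show ?thesis using f1(3) f2(3) by blast
qed

lemma openin_Arr_top_iff:
  "openin Arr_top U \<longleftrightarrow>
     U \<subseteq> Arr \<and> (\<forall>p\<in>U. \<exists>f. f \<in> Mor \<and> cd f = T \<and> p \<in> basic_arrows f \<and> basic_arrows f \<subseteq> U)"
proof -
  have "openin Arr_top U \<longleftrightarrow>
      U \<subseteq> Arr \<and> (\<forall>p\<in>U. \<exists>b\<in>Basic_arrows. p \<in> b \<and> b \<subseteq> U)"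
    unfolding Arr_top_eq using Basic_arrows_subset Basic_arrows_refine
    by (rule openin_subtopology_generated_by_base)
  moreover have "(\<exists>b\<in>Basic_arrows. p \<in> b \<and> b \<subseteq> U) \<longleftrightarrow>
      (\<exists>f. f \<in> Mor \<and> cd f = T \<and> p \<in> basic_arrows f \<and> basic_arrows f \<subseteq> U)" for p
    by auto
  ultimately show ?thesis by simp
qed

lemma Arr_subset_Union_basic_arrows: "Arr \<subseteq> \<Union>Basic_arrows"
proof
  fix p assume "p \<in> Arr"
  then obtain f where "f \<in> Mor" "cd f = T" "p \<in> basic_arrows f"
    by (rule Arr_covered_by_basic_arrows)
  then show "p \<in> \<Union>Basic_arrows" by blast
qed

lemma topspace_Arr_top: "topspace Arr_top = Arr"
  unfolding Arr_top_eq using Arr_subset_Union_basic_arrows by auto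

lemma openin_basic_arrows: "\<lbrakk>f \<in> Mor; cd f = T\<rbrakk> \<Longrightarrow> openin Arr_top (basic_arrows f)"
  unfolding openin_Arr_top_iff using basic_arrows_subset by blast

lemma continuous_map_into_Arr_top:
  assumes "\<And>p. p \<in> topspace S \<Longrightarrow> F p \<in> Arr"
    and "\<And>p f. \<lbrakk>p \<in> topspace S; f \<in> Mor; cd f = T; F p \<in> basic_arrows f\<rbrakk>
           \<Longrightarrow> \<exists>N. openin S N \<and> p \<in> N \<and> F ` N \<subseteq> basic_arrows f"
  shows "continuous_map S Arr_top F"
  unfolding Arr_top_eq
proof (rule continuous_map_into_generated_by_base[OF Basic_arrows_subset Basic_arrows_refine
    Arr_subset_Union_basic_arrows])
  show "F p \<in> Arr" if "p \<in> topspace S" for p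
    using that by (rule assms(1))
  fix p b assume "p \<in> topspace S" "b \<in> Basic_arrows" "F p \<in> b"
  then show "\<exists>N. openin S N \<and> p \<in> N \<and> F ` N \<subseteq> b" using assms(2) by blast
qed

lemma continuous_map_src_star: "continuous_map Arr_top X src_star"
  unfolding continuous_map
proof (intro conjI allI impI)
  show "src_star ` topspace Arr_top \<subseteq> T"
    unfolding topspace_Arr_top src_star_def mor_star_def by auto
next
  fix U assume U: "openin X U"
  show "openin Arr_top {p \<in> topspace Arr_top. src_star p \<in> U}"
    unfolding openin_Arr_top_iff topspace_Arr_top
  proof (intro conjI ballI)
    fix p assume p: "p \<in> {p \<in> Arr. src_star p \<in> U}"
    then obtain f where f: "f \<in> Mor" "cd f = T" "p \<in> basic_arrows f"
      using Arr_covered_by_basic_arrows by blast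
    define W where "W = U \<inter> dm f"
    have W: "openin X W" "W \<subseteq> dm f" unfolding W_def using U openin_dm[OF f(1)] by auto
    have B: "basic_arrows (res f W) = {q \<in> basic_arrows f. src_star q \<in> W}"
      by (rule basic_arrows_res[OF f(1) W])
    have "src_star p \<in> dm f"
      using f(3) unfolding src_star_def by (cases p) (simp add: mem_basic_arrows)
    then have "p \<in> basic_arrows (res f W)"
      unfolding B using p f(3) unfolding W_def by blast
    moreover have "basic_arrows (res f W) \<subseteq> {p \<in> Arr. src_star p \<in> U}"
      using B W_def basic_arrows_subset[of f] by auto
    moreover have "res f W \<in> Mor" "cd (res f W) = T" using res_closed[OF f(1) W] f(2) by auto
    ultimately show "\<exists>f. f \<in> Mor \<and> cd f = T \<and> p \<in> basic_arrows f \<and>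
        basic_arrows f \<subseteq> {p \<in> Arr. src_star p \<in> U}"
      by blast
  qed auto
qed

lemma src_star_basic_arrows:
  assumes "f \<in> Mor" "cd f = T"
  shows "src_star ` basic_arrows f = dm f"
proof
  show "src_star ` basic_arrows f \<subseteq> dm f" unfolding src_star_def basic_arrows_def by auto
next
  show "dm f \<subseteq> src_star ` basic_arrows f"
  proof
    fix x assume x: "x \<in> dm f"
    obtain y \<phi> where a: "y \<in> cd f" "\<phi> \<in> Hom x y" "\<phi> (cd f) = Germ x f"
      by (rule hom_star_exists[OF assms(1) x])
    have "(x, y, \<phi>) \<in> basic_arrows f"
      unfolding mem_basic_arrows mem_Arr using a assms x dm_subset[OF assms(1)] by auto
    then show "x \<in> src_star ` basic_arrows f" unfolding src_star_def by force
  qed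
qed

lemma openin_src_star_image:
  assumes "openin Arr_top U"
  shows "openin X (src_star ` U)"
proof (subst openin_subopen, intro ballI)
  fix x assume "x \<in> src_star ` U"
  then obtain p where p: "p \<in> U" "x = src_star p" by blast
  then obtain f where f: "f \<in> Mor" "cd f = T" "p \<in> basic_arrows f" "basic_arrows f \<subseteq> U"
    using assms unfolding openin_Arr_top_iff by blast
  have "dm f \<subseteq> src_star ` U" using src_star_basic_arrows[OF f(1,2)] f(4) by blast
  moreover have "x \<in> dm f" using src_star_basic_arrows[OF f(1,2)] f(3) p(2) by blast
  ultimately show "\<exists>T. openin X T \<and> x \<in> T \<and> T \<subseteq> src_star ` U"
    using openin_dm[OF f(1)] by blast
qed

lemma inj_on_src_star_basic_arrows:
  assumes "f \<in> Mor" "cd f = T"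
  shows "inj_on src_star (basic_arrows f)"
proof (rule inj_onI)
  fix p q assume pq: "p \<in> basic_arrows f" "q \<in> basic_arrows f" "src_star p = src_star q"
  obtain x y \<phi> where p: "p = (x, y, \<phi>)" by (cases p)
  obtain x' y' \<phi>' where q: "q = (x', y', \<phi>')" by (cases q)
  have a: "x \<in> T" "y \<in> T" "\<phi> \<in> Hom x y" "\<phi> T = Germ x f"
    using pq(1) unfolding p mem_basic_arrows mem_Arr by auto
  have b: "x' = x" "y' \<in> T" "\<phi>' \<in> Hom x y'" "\<phi>' T = Germ x f"
    using pq(2,3) unfolding p q mem_basic_arrows mem_Arr src_star_def by auto
  have "y = y' \<and> \<phi> = \<phi>'"
    by (rule hom_star_unique[OF a(1) openin_topspace a(2) b(2) a(3) b(3)]) (use a b in simp)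
  then show "p = q" using p q b by simp
qed

lemma homeomorphic_map_src_star:
  assumes "f \<in> Mor" "cd f = T"
  shows "homeomorphic_map (subtopology Arr_top (basic_arrows f)) (subtopology X (dm f)) src_star"
proof (rule bijective_open_imp_homeomorphic_map)
  have tB: "topspace (subtopology Arr_top (basic_arrows f)) = basic_arrows f"
    using basic_arrows_subset topspace_Arr_top by auto
  have tD: "topspace (subtopology X (dm f)) = dm f" using dm_subset[OF assms(1)] by auto
  note oB = openin_basic_arrows[OF assms] and oD = openin_dm[OF assms(1)]
  show "continuous_map (subtopology Arr_top (basic_arrows f)) (subtopology X (dm f)) src_star"
    unfolding continuous_map_in_subtopology
    using continuous_map_from_subtopology[OF continuous_map_src_star] src_star_basic_arrows[OF assms] tB
    by auto
  show "open_map (subtopology Arr_top (basic_arrows f)) (subtopology X (dm f)) src_star"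
    unfolding open_map_def
  proof (intro allI impI)
    fix U assume "openin (subtopology Arr_top (basic_arrows f)) U"
    then have U: "openin Arr_top U" "U \<subseteq> basic_arrows f" using openin_open_subtopology[OF oB] by auto
    show "openin (subtopology X (dm f)) (src_star ` U)"
      unfolding openin_open_subtopology[OF oD]
      using openin_src_star_image[OF U(1)] U(2) src_star_basic_arrows[OF assms] by blast
  qed
  show "src_star ` topspace (subtopology Arr_top (basic_arrows f)) = topspace (subtopology X (dm f))"
    unfolding tB tD by (rule src_star_basic_arrows[OF assms])
  show "inj_on src_star (topspace (subtopology Arr_top (basic_arrows f)))"
    unfolding tB by (rule inj_on_src_star_basic_arrows[OF assms])
qed

lemma local_homeomorphism_map_src_star: "local_homeomorphism_map Arr_top X src_star"
  unfolding local_homeomorphism_map_def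
proof (intro conjI ballI)
  show "src_star ` topspace Arr_top \<subseteq> T"
    using continuous_map_src_star continuous_map_image_subset_topspace by blast
next
  fix p assume "p \<in> topspace Arr_top"
  then obtain f where f: "f \<in> Mor" "cd f = T" "p \<in> basic_arrows f"
    unfolding topspace_Arr_top by (rule Arr_covered_by_basic_arrows)
  show "\<exists>N. openin Arr_top N \<and> p \<in> N \<and> openin X (src_star ` N) \<and>
         homeomorphic_map (subtopology Arr_top N) (subtopology X (src_star ` N)) src_star"
    using openin_basic_arrows[OF f(1,2)] f(3) src_star_basic_arrows[OF f(1,2)] openin_dm[OF f(1)]
      homeomorphic_map_src_star[OF f(1,2)]
    by (intro exI[of _ "basic_arrows f"]) simp
qed

lemma inv_star_in_basic_arrows:
  assumes f: "f \<in> Mor" "cd f = T" and f1: "f1 \<in> Mor" "cd f1 = dm f" "x \<in> dm f1"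
    and loop: "Germ x (cmp f f1) = Germ x (ident T)"
    and p: "(x, y, \<phi>) \<in> Arr" "\<phi> T = Germ x (widen f1)"
  shows "Inv (x, y, \<phi>) \<in> basic_arrows f"
proof -
  have x: "x \<in> T" and y: "y \<in> T" and \<phi>: "\<phi> \<in> Hom x y" using p(1) mem_Arr by auto
  have yf: "y \<in> dm f" "\<phi> (dm f) = Germ x f1"
    using hom_star_widen_iff[OF f1(1,3) \<phi> y] p(2) f1(2) by auto
  obtain w \<psi> where \<psi>: "w \<in> cd f" "\<psi> \<in> Hom y w" "\<psi> (cd f) = Germ y f"
    by (rule hom_star_exists[OF f(1) yf(1)])
  have w: "w \<in> T" using \<psi>(1) f(2) by simp
  have "f \<in> \<psi> T" using \<psi>(3) f(2) germ_self[OF f(1) yf(1)] by simp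
  moreover have "f1 \<in> \<phi> (dm f)" using yf(2) germ_self[OF f1(1,3)] by simp
  ultimately have "Comp x w \<psi> \<phi> T = Germ x (cmp f f1)"
    by (rule comp_star_germ[OF \<phi> \<psi>(2) openin_topspace w])
  also have "\<dots> = Ident x T" using loop id_star_germ[OF openin_topspace x] by simp
  finally have "w = x \<and> Comp x w \<psi> \<phi> = Ident x"
    using hom_star_unique[OF x openin_topspace w x comp_star_hom[OF \<phi> \<psi>(2)] id_star_hom[OF x]]
    by blast
  then have "Inv (x, y, \<phi>) = (y, x, \<psi>)" using inv_star_eqI[OF p(1)] \<psi>(2) by auto
  moreover have "(y, x, \<psi>) \<in> Arr" using x y \<psi>(2) \<open>w = x \<and> _\<close> mem_Arr by auto
  ultimately show ?thesis using yf(1) \<psi>(3) f(2) mem_basic_arrows by simp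
qed

text \<open>In a groupoid a left inverse is the inverse, so it suffices to build left inverses near
  the given arrow.\<close>

lemma inv_star_near:
  assumes p: "p \<in> Arr" and f: "f \<in> Mor" "cd f = T" "Inv p \<in> basic_arrows f"
  shows "\<exists>N. openin Arr_top N \<and> p \<in> N \<and> Inv ` N \<subseteq> basic_arrows f"
proof -
  obtain x y \<phi> where pp: "p = (x, y, \<phi>)" by (cases p)
  obtain \<psi> where \<psi>: "Inv p = (y, x, \<psi>)" "\<psi> \<in> Hom y x"
    "Comp x x \<psi> \<phi> = Ident x" "Comp y y \<phi> \<psi> = Ident y"
    using p unfolding pp by (rule inv_starE)
  have x: "x \<in> T" and y: "y \<in> T" and \<phi>: "\<phi> \<in> Hom x y" using p pp mem_Arr by auto
  have yf: "y \<in> dm f" "\<psi> T = Germ y f" using f(3) unfolding \<psi>(1) mem_basic_arrows by auto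
  obtain f1 where f1_0: "f1 \<in> \<phi> (dm f)"
    by (rule hom_star_some_mem[OF \<phi> openin_dm[OF f(1)] yf(1)])
  note f1 = hom_star_memD[OF \<phi> openin_dm[OF f(1)] yf(1) f1_0]
  note ff1 = cmp_closed[OF f1(1) f(1) f1(2)]
  note iT = ident_closed[OF openin_topspace]
  have "f \<in> \<psi> T" using yf(2) germ_self[OF f(1) yf(1)] by simp
  then have "Germ x (cmp f f1) = Comp x x \<psi> \<phi> T"
    using comp_star_germ[OF \<phi> \<psi>(2) openin_topspace x _ f1_0] by simp
  also have "\<dots> = Germ x (ident T)" using \<psi>(3) id_star_germ[OF openin_topspace x] by simp
  finally have loop: "Germ x (cmp f f1) = Germ x (ident T)" .
  have "cd (ident T) = cd (cmp f f1)" "x \<in> dm (cmp f f1)" "x \<in> dm (ident T)"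
    using iT ff1 f(2) f1(3) x by auto
  then obtain A where A: "openin X A" "x \<in> A" "A \<subseteq> dm (cmp f f1) \<inter> dm (ident T)"
    "\<And>x'. x' \<in> A \<Longrightarrow> Germ x' (cmp f f1) = Germ x' (ident T)"
    by (rule germ_eq_near[OF ff1(1) iT(1) _ _ _ loop]) blast
  note wf1 = widen_closed[OF f1(1)]
  have A1: "A \<subseteq> dm (widen f1)" using A(3) ff1(2) wf1(2) by auto
  have h: "res (widen f1) A \<in> Mor" "cd (res (widen f1) A) = T"
    using res_closed[OF wf1(1) A(1) A1] wf1(3) by auto
  have B: "basic_arrows (res (widen f1) A) = {q \<in> basic_arrows (widen f1). src_star q \<in> A}"
    by (rule basic_arrows_res[OF wf1(1) A(1) A1])
  have "\<phi> T = Germ x (widen f1)"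
    using hom_star_widen_iff[OF f1(1,3) \<phi> y] f1(2,4) yf(1) by simp
  then have "p \<in> basic_arrows (res (widen f1) A)"
    unfolding B pp using p pp A(2) f1(3) wf1(2) by (simp add: mem_basic_arrows src_star_def)
  moreover have "Inv ` basic_arrows (res (widen f1) A) \<subseteq> basic_arrows f"
  proof
    fix r assume "r \<in> Inv ` basic_arrows (res (widen f1) A)"
    then obtain q where q: "q \<in> basic_arrows (res (widen f1) A)" "r = Inv q" by blast
    obtain x' y' \<phi>' where qq: "q = (x', y', \<phi>')" by (cases q)
    have "q \<in> Arr" "x' \<in> A" "\<phi>' T = Germ x' (widen f1)"
      using q(1) unfolding B qq by (auto simp: mem_basic_arrows src_star_def)
    then show "r \<in> basic_arrows f"
      unfolding q(2) qq using inv_star_in_basic_arrows[OF f(1,2) f1(1,2) _ A(4)] A(3) ff1(2) by auto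
  qed
  ultimately show ?thesis using openin_basic_arrows[OF h] by blast
qed

lemma continuous_map_inv_star: "continuous_map Arr_top Arr_top Inv"
proof (rule continuous_map_into_Arr_top)
  show "Inv p \<in> Arr" if "p \<in> topspace Arr_top" for p
    using that inv_star_in_Arr topspace_Arr_top by simp
  show "\<exists>N. openin Arr_top N \<and> p \<in> N \<and> Inv ` N \<subseteq> basic_arrows f"
    if "p \<in> topspace Arr_top" "f \<in> Mor" "cd f = T" "Inv p \<in> basic_arrows f" for p f
    using inv_star_near[of p f] that topspace_Arr_top by simp
qed

lemma homeomorphic_map_inv_star: "homeomorphic_map Arr_top Arr_top Inv"
  by (rule homeomorphic_map_involution[OF continuous_map_inv_star])
    (simp add: topspace_Arr_top inv_star_inv_star)

lemma local_homeomorphism_map_tgt_star: "local_homeomorphism_map Arr_top X tgt_star"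
  by (rule local_homeomorphism_map_homeomorphic_compose[OF homeomorphic_map_inv_star
        local_homeomorphism_map_src_star])
    (simp add: topspace_Arr_top tgt_star_eq_src_star_inv)

lemma continuous_map_id_star: "continuous_map X Arr_top (\<lambda>x. (x, x, Ident x))"
proof (rule continuous_map_into_Arr_top)
  show "(x, x, Ident x) \<in> Arr" if "x \<in> T" for x
    using that id_star_hom mem_Arr by simp
next
  fix x f assume x: "x \<in> T" and f: "f \<in> Mor" "cd f = T" "(x, x, Ident x) \<in> basic_arrows f"
  note iT = ident_closed[OF openin_topspace]
  have b: "x \<in> dm f" "Germ x (ident T) = Germ x f"
    using f(3) id_star_germ[OF openin_topspace x] unfolding mem_basic_arrows by auto
  have "cd f = cd (ident T)" "x \<in> dm (ident T)" using iT f(2) x by auto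
  then obtain A where A: "openin X A" "x \<in> A" "A \<subseteq> dm (ident T) \<inter> dm f"
    "\<And>x'. x' \<in> A \<Longrightarrow> Germ x' (ident T) = Germ x' f"
    by (rule germ_eq_near[OF iT(1) f(1) _ _ b]) blast
  have "(x', x', Ident x') \<in> basic_arrows f" if "x' \<in> A" for x'
  proof -
    have "x' \<in> T" "x' \<in> dm f" using A(3) that iT by auto
    then show ?thesis
      unfolding mem_basic_arrows mem_Arr using id_star_hom id_star_germ[OF openin_topspace] A(4) that
      by simp
  qed
  then show "\<exists>N. openin X N \<and> x \<in> N \<and> (\<lambda>x. (x, x, Ident x)) ` N \<subseteq> basic_arrows f"
    using A(1,2) by blast
qed

abbreviation "Composable \<equiv> {(q, p). q \<in> Arr \<and> p \<in> Arr \<and> src_star q = tgt_star p}"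

lemma compose_star_eq: "Compose ((y, z, \<psi>), (x, y', \<phi>)) = (x, z, Comp x z \<psi> \<phi>)"
  unfolding compose_star_def by simp

lemma Composable_cases:
  assumes "qp \<in> Composable"
  obtains y z \<psi> x \<phi> where "qp = ((y, z, \<psi>), (x, y, \<phi>))" "(y, z, \<psi>) \<in> Arr" "(x, y, \<phi>) \<in> Arr"
proof -
  obtain q p where qp: "qp = (q, p)" by (cases qp)
  obtain y z \<psi> where q: "q = (y, z, \<psi>)" by (cases q)
  obtain x y' \<phi> where p: "p = (x, y', \<phi>)" by (cases p)
  have "y' = y" "q \<in> Arr" "p \<in> Arr"
    using assms unfolding qp q p src_star_def tgt_star_def by auto
  then show ?thesis using that qp q p by blast
qed

lemma compose_star_in_basic_arrows:
  assumes g: "g \<in> Mor" "cd g = T" and f: "f \<in> Mor" "cd f = dm g"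
    and k: "x \<in> dm k" "Germ x (cmp g f) = Germ x k"
    and q: "(y, z, \<psi>) \<in> basic_arrows g"
    and p: "(x, y, \<phi>) \<in> Arr" "x \<in> dm f" "\<phi> T = Germ x (widen f)"
  shows "(x, z, Comp x z \<psi> \<phi>) \<in> basic_arrows k"
proof -
  have yz: "y \<in> T" "z \<in> T" "\<psi> \<in> Hom y z" "y \<in> dm g" "\<psi> T = Germ y g"
    using q unfolding mem_basic_arrows mem_Arr by auto
  have x: "x \<in> T" and \<phi>: "\<phi> \<in> Hom x y" using p(1) mem_Arr by auto
  have "y \<in> cd f \<and> \<phi> (cd f) = Germ x f"
    using hom_star_widen_iff[OF f(1) p(2) \<phi> yz(1)] p(3) by simp
  then have "f \<in> \<phi> (dm g)" using f(2) germ_self[OF f(1) p(2)] by simp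
  moreover have "g \<in> \<psi> T" using yz(5) germ_self[OF g(1) yz(4)] by simp
  ultimately have "Comp x z \<psi> \<phi> T = Germ x (cmp g f)"
    using comp_star_germ[OF \<phi> yz(3) openin_topspace yz(2)] by simp
  then show ?thesis
    unfolding mem_basic_arrows mem_Arr using x yz(2) comp_star_hom[OF \<phi> yz(3)] k by simp
qed

lemma compose_star_near:
  assumes q: "(y, z, \<psi>) \<in> Arr" and p: "(x, y, \<phi>) \<in> Arr"
    and k: "k \<in> Mor" "cd k = T" "(x, z, Comp x z \<psi> \<phi>) \<in> basic_arrows k"
  obtains g h where "g \<in> Mor" "cd g = T" "(y, z, \<psi>) \<in> basic_arrows g"
    "h \<in> Mor" "cd h = T" "(x, y, \<phi>) \<in> basic_arrows h"
    "\<And>x' y' z' \<phi>' \<psi>'. \<lbrakk>(y', z', \<psi>') \<in> basic_arrows g; (x', y', \<phi>') \<in> basic_arrows h\<rbrakk>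
       \<Longrightarrow> (x', z', Comp x' z' \<psi>' \<phi>') \<in> basic_arrows k"
proof -
  have yz: "y \<in> T" "z \<in> T" "\<psi> \<in> Hom y z" and \<phi>: "\<phi> \<in> Hom x y" using p q mem_Arr by auto
  have kx: "x \<in> dm k" "Comp x z \<psi> \<phi> T = Germ x k" using k(3) unfolding mem_basic_arrows by auto
  obtain g where g0: "g \<in> \<psi> T" by (rule hom_star_some_mem[OF yz(3) openin_topspace yz(2)])
  note g = hom_star_memD[OF yz(3) openin_topspace yz(2) g0]
  obtain f where f0: "f \<in> \<phi> (dm g)" by (rule hom_star_some_mem[OF \<phi> openin_dm[OF g(1)] g(3)])
  note f = hom_star_memD[OF \<phi> openin_dm[OF g(1)] g(3) f0]
  note gf = cmp_closed[OF f(1) g(1) f(2)]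
  have "cd k = cd (cmp g f)" "x \<in> dm (cmp g f)" using gf g(2) k(2) f(3) by auto
  moreover have "Germ x (cmp g f) = Germ x k"
    using comp_star_germ[OF \<phi> yz(3) openin_topspace yz(2) g0 f0] kx(2) by simp
  ultimately obtain A where A: "openin X A" "x \<in> A" "A \<subseteq> dm (cmp g f) \<inter> dm k"
    "\<And>x'. x' \<in> A \<Longrightarrow> Germ x' (cmp g f) = Germ x' k"
    by (rule germ_eq_near[OF gf(1) k(1) _ _ kx(1)]) blast
  note wf = widen_closed[OF f(1)]
  have A1: "A \<subseteq> dm (widen f)" using A(3) gf(2) wf(2) by auto
  have h: "res (widen f) A \<in> Mor" "cd (res (widen f) A) = T"
    using res_closed[OF wf(1) A(1) A1] wf(3) by auto
  have B: "basic_arrows (res (widen f) A) = {p \<in> basic_arrows (widen f). src_star p \<in> A}"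
    by (rule basic_arrows_res[OF wf(1) A(1) A1])
  have "(y, z, \<psi>) \<in> basic_arrows g" using q g(3,4) by (simp add: mem_basic_arrows)
  moreover have "\<phi> T = Germ x (widen f)"
    using hom_star_widen_iff[OF f(1,3) \<phi> yz(1)] f(2,4) g(3) by simp
  then have "(x, y, \<phi>) \<in> basic_arrows (res (widen f) A)"
    unfolding B using p A(2) f(3) wf(2) by (simp add: mem_basic_arrows src_star_def)
  moreover have "(x', z', Comp x' z' \<psi>' \<phi>') \<in> basic_arrows k"
    if "(y', z', \<psi>') \<in> basic_arrows g" "(x', y', \<phi>') \<in> basic_arrows (res (widen f) A)"
    for x' y' z' \<phi>' \<psi>'
  proof -
    have "(x', y', \<phi>') \<in> Arr" "x' \<in> A" "\<phi>' T = Germ x' (widen f)"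
      using that(2) unfolding B by (auto simp: mem_basic_arrows src_star_def)
    moreover have "x' \<in> dm k" "x' \<in> dm f" using A(3) gf(2) \<open>x' \<in> A\<close> by auto
    ultimately show ?thesis
      using compose_star_in_basic_arrows[OF g(1,2) f(1,2) _ A(4) that(1)] by blast
  qed
  ultimately show ?thesis using that[OF g(1,2) _ h] by blast
qed

lemma continuous_map_compose_star:
  "continuous_map (subtopology (prod_topology Arr_top Arr_top) Composable) Arr_top Compose"
proof (rule continuous_map_into_Arr_top)
  have top: "topspace (subtopology (prod_topology Arr_top Arr_top) Composable) = Composable"
    using topspace_Arr_top by auto
  show "Compose qp \<in> Arr"
    if qp: "qp \<in> topspace (subtopology (prod_topology Arr_top Arr_top) Composable)" for qp
  proof -
    obtain y z \<psi> x \<phi> where "qp = ((y, z, \<psi>), (x, y, \<phi>))" "(y, z, \<psi>) \<in> Arr" "(x, y, \<phi>) \<in> Arr"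
      using qp unfolding top by (rule Composable_cases)
    then show ?thesis using comp_star_hom by (auto simp: compose_star_eq mem_Arr)
  qed
  fix qp k
  assume qp: "qp \<in> topspace (subtopology (prod_topology Arr_top Arr_top) Composable)"
    and k: "k \<in> Mor" "cd k = T" "Compose qp \<in> basic_arrows k"
  obtain y z \<psi> x \<phi> where qp': "qp = ((y, z, \<psi>), (x, y, \<phi>))" "(y, z, \<psi>) \<in> Arr" "(x, y, \<phi>) \<in> Arr"
    using qp unfolding top by (rule Composable_cases)
  obtain g h where gh: "g \<in> Mor" "cd g = T" "(y, z, \<psi>) \<in> basic_arrows g"
      "h \<in> Mor" "cd h = T" "(x, y, \<phi>) \<in> basic_arrows h"
      "\<And>x' y' z' \<phi>' \<psi>'. \<lbrakk>(y', z', \<psi>') \<in> basic_arrows g; (x', y', \<phi>') \<in> basic_arrows h\<rbrakk>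
         \<Longrightarrow> (x', z', Comp x' z' \<psi>' \<phi>') \<in> basic_arrows k"
    by (rule compose_star_near[OF qp'(2,3) k(1,2)]) (use k(3) qp'(1) compose_star_eq in auto)
  define N where "N = (basic_arrows g \<times> basic_arrows h) \<inter> Composable"
  have "openin (subtopology (prod_topology Arr_top Arr_top) Composable) N"
    unfolding N_def using openin_basic_arrows[OF gh(1,2)] openin_basic_arrows[OF gh(4,5)]
    by (simp add: openin_subtopology_Int openin_prod_Times_iff)
  moreover have "qp \<in> N"
    unfolding N_def qp'(1) using qp'(2,3) gh(3,6) by (simp add: src_star_def tgt_star_def)
  moreover have "Compose ` N \<subseteq> basic_arrows k"
  proof
    fix r assume "r \<in> Compose ` N"
    then obtain qp1 where qp1: "r = Compose qp1" "qp1 \<in> N" by blast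
    then have "qp1 \<in> Composable" unfolding N_def by blast
    then obtain y1 z1 \<psi>1 x1 \<phi>1 where "qp1 = ((y1, z1, \<psi>1), (x1, y1, \<phi>1))"
        "(y1, z1, \<psi>1) \<in> Arr" "(x1, y1, \<phi>1) \<in> Arr"
      by (rule Composable_cases)
    then have "r = Compose ((y1, z1, \<psi>1), (x1, y1, \<phi>1))"
        "(y1, z1, \<psi>1) \<in> basic_arrows g" "(x1, y1, \<phi>1) \<in> basic_arrows h"
      using qp1 unfolding N_def by auto
    then show "r \<in> basic_arrows k" using gh(7) compose_star_eq by simp
  qed
  ultimately show "\<exists>N. openin (subtopology (prod_topology Arr_top Arr_top) Composable) N \<and> qp \<in> N
      \<and> Compose ` N \<subseteq> basic_arrows k"
    by blast
qed

end

theorem mainTheorem4: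
  fixes X :: "'a topology"
    and Mor :: "'m set" and dm cd :: "'m \<Rightarrow> 'a set"
    and cmp :: "'m \<Rightarrow> 'm \<Rightarrow> 'm" and ident :: "'a set \<Rightarrow> 'm"
    and incl :: "'a set \<Rightarrow> 'a set \<Rightarrow> 'm"
  assumes "t1_space X"
    and "pre_pseudogroup X Mor dm cd cmp ident incl"
  shows "local_homeomorphism_map (mor_top X Mor dm cd cmp incl) X src_star
       \<and> local_homeomorphism_map (mor_top X Mor dm cd cmp incl) X tgt_star
       \<and> continuous_map X (mor_top X Mor dm cd cmp incl)
           (\<lambda>x. (x, x, id_star X Mor dm cd cmp ident incl x))
       \<and> continuous_map (mor_top X Mor dm cd cmp incl) (mor_top X Mor dm cd cmp incl)
           (inv_star X Mor dm cd cmp ident incl)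
       \<and> continuous_map
           (subtopology (prod_topology (mor_top X Mor dm cd cmp incl) (mor_top X Mor dm cd cmp incl))
              {(q, p). q \<in> mor_star X Mor dm cd cmp incl \<and> p \<in> mor_star X Mor dm cd cmp incl
                       \<and> src_star q = tgt_star p})
           (mor_top X Mor dm cd cmp incl)
           (compose_star X Mor dm cd cmp incl)"
proof -
  interpret pre_pseudogroup_setting X Mor dm cd cmp ident incl
    by (rule pre_pseudogroup_setting.intro) (rule assms(2))
  show ?thesis
    using local_homeomorphism_map_src_star local_homeomorphism_map_tgt_star continuous_map_id_star
      continuous_map_inv_star continuous_map_compose_star
    by (intro conjI)
qed

end
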